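(* Let $(M,H,g)$ be a 3-dimensional ts-oriented contact sub-Lorentzian manifold and $p\in M$. Then there is an oriented orthonormal frame $(X_1,X_2)$ near $p$ such that the matrix $h$ at $p$ takes one of the following forms: (1) if $\det h(p)=0$: $h(p)\in\left\{\begin{pmatrix}0&0\\0&0\end{pmatrix},\begin{pmatrix}1&\pm1\\ \mp1&-1\end{pmatrix},\begin{pmatrix}-1&\pm1\\ \mp1&1\end{pmatrix}\right\}$; (2) if $\det h(p)>0$: $h(p)=\begin{pmatrix}0&\chi\\-\chi&0\end{pmatrix}$ for some $\chi\neq0$; (3) if $\det h(p)<0$: $h(p)=\begin{pmatrix}\chi&0\\0&-\chi\end{pmatrix}$ for some $\chi\ne0$. Moreover, if $h(p)\neq0$, the value of such a frame at $p$ is unique.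
   Context: An oriented orthonormal frame is a local frame $(X_1,X_2)$ of $H$ with $g(X_1,X_1)=-1$, $g(X_1,X_2)=0$, $g(X_2,X_2)=1$, compatible with the time and space orientations; any two differ by $(X_1',X_2')=(\cosh t\,X_1+\sinh t\,X_2,\ \sinh t\,X_1+\cosh t\,X_2)$. With $\eta$ the contact form vanishing on $H$ and $\eta([X_2,X_1])=1$, $X_3$ is defined by $\eta(X_3)=-1$, $X_3\lrcorner d\eta=0$, and the structure functions by $[X_1,X_3]=cX_1+c^2_{13}X_2$, $[X_2,X_3]=c^1_{23}X_1-cX_2$, $[X_1,X_2]=c^1_{12}X_1+c^2_{12}X_2+X_3$. The matrix $h$ (computed in a given frame) is $h=\begin{pmatrix}c&\frac{c^2_{13}-c^1_{23}}2\\ \frac{c^1_{23}-c^2_{13}}2&-c\end{pmatrix}$; under change of frame it changes by conjugation by an element of $SO^+_{1,1}(\mathbb{R})=\{\begin{psmallmatrix}\cosh t&\sinh t\\ \sinh t&\cosh t\end{psmallmatrix}\}$. *)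

theory Defs
  imports "HOL-Analysis.Analysis"
begin

text \<open>Local model: a neighbourhood of p in the 3-manifold is an open set U of real^3
  (a chart). Vector fields are maps real^3 => real^3.\<close>

type_synonym R3 = "real^3"

fun iterD :: "R3 list \<Rightarrow> (R3 \<Rightarrow> 'a::real_normed_vector) \<Rightarrow> R3 \<Rightarrow> 'a" where
  "iterD [] f = f"
| "iterD (v # vs) f = (\<lambda>x. frechet_derivative (iterD vs f) (at x) v)"

definition smooth_on :: "R3 set \<Rightarrow> (R3 \<Rightarrow> 'a::real_normed_vector) \<Rightarrow> bool" where
  "smooth_on U f \<longleftrightarrow> (\<forall>vs x. x \<in> U \<longrightarrow> iterD vs f differentiable (at x))"

definition lie :: "(R3 \<Rightarrow> R3) \<Rightarrow> (R3 \<Rightarrow> R3) \<Rightarrow> R3 \<Rightarrow> R3" where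
  "lie X Y x = frechet_derivative Y (at x) (X x) - frechet_derivative X (at x) (Y x)"

definition lin_indep3 :: "R3 \<Rightarrow> R3 \<Rightarrow> R3 \<Rightarrow> bool" where
  "lin_indep3 u v w \<longleftrightarrow>
     (\<forall>a b c. a *\<^sub>R u + b *\<^sub>R v + c *\<^sub>R w = 0 \<longrightarrow> a = 0 \<and> b = 0 \<and> c = 0)"

definition coords :: "R3 \<Rightarrow> R3 \<Rightarrow> R3 \<Rightarrow> R3 \<Rightarrow> real \<times> real \<times> real" where
  "coords u v w z = (THE abc. z = fst abc *\<^sub>R u + fst (snd abc) *\<^sub>R v + snd (snd abc) *\<^sub>R w)"

text \<open>A 3-dimensional ts-oriented contact sub-Lorentzian structure on the open set U,
  given by a reference oriented orthonormal frame (Y1,Y2): H = span(Y1,Y2),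
  g(Y1,Y1) = -1, g(Y1,Y2) = 0, g(Y2,Y2) = 1, time orientation given by Y1, space
  orientation given by Y2; H is contact iff Y1, Y2, [Y1,Y2] are independent everywhere.\<close>
definition contact_subLorentzian :: "R3 set \<Rightarrow> (R3 \<Rightarrow> R3) \<Rightarrow> (R3 \<Rightarrow> R3) \<Rightarrow> bool" where
  "contact_subLorentzian U Y1 Y2 \<longleftrightarrow> open U \<and> smooth_on U Y1 \<and> smooth_on U Y2 \<and>
     (\<forall>x\<in>U. lin_indep3 (Y1 x) (Y2 x) (lie Y1 Y2 x))"

text \<open>Oriented orthonormal frame (X1,X2) of H defined on an open neighbourhood V \<subseteq> U:
  X1, X2 are smooth sections of H with g(X1,X1) = -1, g(X1,X2) = 0, g(X2,X2) = 1,
  X1 future directed (g(X1,Y1) < 0) and X2 in the positive space cone (g(X2,Y2) > 0).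
  Writing X1 = a Y1 + b Y2, X2 = c Y1 + d Y2 these conditions read as below.\<close>
definition oon_frame ::
  "R3 set \<Rightarrow> (R3 \<Rightarrow> R3) \<Rightarrow> (R3 \<Rightarrow> R3) \<Rightarrow> R3 set \<Rightarrow> (R3 \<Rightarrow> R3) \<Rightarrow> (R3 \<Rightarrow> R3) \<Rightarrow> bool" where
  "oon_frame U Y1 Y2 V X1 X2 \<longleftrightarrow> open V \<and> V \<subseteq> U \<and> smooth_on V X1 \<and> smooth_on V X2 \<and>
     (\<forall>x\<in>V. \<exists>a b c d. X1 x = a *\<^sub>R Y1 x + b *\<^sub>R Y2 x \<and> X2 x = c *\<^sub>R Y1 x + d *\<^sub>R Y2 x \<and>
        - a * a + b * b = -1 \<and> - a * c + b * d = 0 \<and> - c * c + d * d = 1 \<and>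
        - a < 0 \<and> d > 0)"

text \<open>The contact form eta: vanishes on H = span(X1,X2) and eta([X2,X1]) = 1.\<close>
definition eta :: "(R3 \<Rightarrow> R3) \<Rightarrow> (R3 \<Rightarrow> R3) \<Rightarrow> R3 \<Rightarrow> R3 \<Rightarrow> real" where
  "eta X1 X2 x z = snd (snd (coords (X1 x) (X2 x) (lie X2 X1 x) z))"

definition deta :: "(R3 \<Rightarrow> R3) \<Rightarrow> (R3 \<Rightarrow> R3) \<Rightarrow> (R3 \<Rightarrow> R3) \<Rightarrow> (R3 \<Rightarrow> R3) \<Rightarrow> R3 \<Rightarrow> real" where
  "deta X1 X2 A B x =
     frechet_derivative (\<lambda>y. eta X1 X2 y (B y)) (at x) (A x)
   - frechet_derivative (\<lambda>y. eta X1 X2 y (A y)) (at x) (B x)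
   - eta X1 X2 x (lie A B x)"

text \<open>X3 on V: eta(X3) = -1 and X3 \<lrcorner> d eta = 0 (d eta is a tensor and (X1,X2,X3) is
  a frame, so it suffices to test against X1, X2; d eta(X3,X3) = 0 trivially).
  X3 is normalised to 0 outside V so that it is uniquely determined.\<close>
definition X3of :: "R3 set \<Rightarrow> (R3 \<Rightarrow> R3) \<Rightarrow> (R3 \<Rightarrow> R3) \<Rightarrow> R3 \<Rightarrow> R3" where
  "X3of V X1 X2 = (THE X3. smooth_on V X3 \<and> (\<forall>x. x \<notin> V \<longrightarrow> X3 x = 0) \<and>
      (\<forall>x\<in>V. eta X1 X2 x (X3 x) = -1 \<and> deta X1 X2 X3 X1 x = 0 \<and> deta X1 X2 X3 X2 x = 0))"

definition mat2 :: "real \<Rightarrow> real \<Rightarrow> real \<Rightarrow> real \<Rightarrow> real^2^2" where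
  "mat2 a b c d = vector [vector [a, b], vector [c, d]]"

text \<open>Structure functions at x: [X1,X3] = c X1 + c13 X2, [X2,X3] = c23 X1 - c X2,
  and the matrix h.\<close>
definition hmat :: "R3 set \<Rightarrow> (R3 \<Rightarrow> R3) \<Rightarrow> (R3 \<Rightarrow> R3) \<Rightarrow> R3 \<Rightarrow> real^2^2" where
  "hmat V X1 X2 x =
     (let X3 = X3of V X1 X2;
          k13 = coords (X1 x) (X2 x) (X3 x) (lie X1 X3 x);
          k23 = coords (X1 x) (X2 x) (X3 x) (lie X2 X3 x);
          c = fst k13; c13_2 = fst (snd k13); c23_1 = fst k23
      in mat2 c ((c13_2 - c23_1) / 2) ((c23_1 - c13_2) / 2) (- c))"

definition normal_form :: "real^2^2 \<Rightarrow> bool" where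
  "normal_form h \<longleftrightarrow>
     (det h = 0 \<longrightarrow> h \<in> {mat2 0 0 0 0, mat2 1 1 (-1) (-1), mat2 1 (-1) 1 (-1),
                          mat2 (-1) 1 (-1) 1, mat2 (-1) (-1) 1 1}) \<and>
     (det h > 0 \<longrightarrow> (\<exists>k. k \<noteq> 0 \<and> h = mat2 0 k (-k) 0)) \<and>
     (det h < 0 \<longrightarrow> (\<exists>k. k \<noteq> 0 \<and> h = mat2 k 0 0 (-k)))"

end

theory Submission
  imports Defs
begin

text \<open>Every oriented orthonormal frame is, pointwise, a boost
  \<open>(X1, X2) = (cosh t Y1 + sinh t Y2, sinh t Y1 + cosh t Y2)\<close> of a fixed reference frame \<open>(Y1, Y2)\<close>.
  The contact form \<open>\<eta>\<close> and the Reeb field \<open>X3\<close> do not depend on the frame, so at \<open>p\<close> the matrix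
  \<open>h\<close> of the boosted frame is that of the reference frame conjugated by the boost; that \<open>h\<close> is
  trace free comes from the Jacobi identity for \<open>Y1, Y2, X3\<close>. Writing \<open>h = (c, b; -b, -c)\<close> in
  light-cone coordinates \<open>u = c + b\<close>, \<open>w = c - b\<close>, the boost multiplies \<open>u\<close> by \<open>e\<^sup>-\<^sup>2\<^sup>t\<close> and \<open>w\<close>
  by \<open>e\<^sup>2\<^sup>t\<close>, leaving \<open>det h = - u w\<close> invariant. A suitable \<open>t\<close> normalises \<open>(u, w)\<close> to
  \<open>(0, \<plusminus>2)\<close>, \<open>(\<plusminus>2, 0)\<close> or \<open>u = \<plusminus>w\<close>, and unless \<open>h(p) = 0\<close> this \<open>t\<close>, hence the frame at \<open>p\<close>,
  is unique.\<close>

section \<open>Smooth functions on open subsets of \<open>\<real>\<^sup>3\<close>\<close>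

lemma iterD_snoc: "iterD (vs @ [v]) f = iterD vs (\<lambda>x. frechet_derivative f (at x) v)"
  by (induction vs) auto

lemma has_derivative_frechet_derivative:
  "f differentiable (at x) \<Longrightarrow> (f has_derivative frechet_derivative f (at x)) (at x)"
  using frechet_derivative_works by blast

lemma has_derivative_cong_open:
  assumes "open S" "x \<in> S" "\<And>y. y \<in> S \<Longrightarrow> f y = g y"
  shows "(f has_derivative D) (at x) \<longleftrightarrow> (g has_derivative D) (at x)"
proof
  assume "(f has_derivative D) (at x)"
  then show "(g has_derivative D) (at x)"
    using has_derivative_transform_within_open[OF _ assms(1,2)] assms(3) by metis
next
  assume "(g has_derivative D) (at x)"
  then show "(f has_derivative D) (at x)"
    using has_derivative_transform_within_open[OF _ assms(1,2)] assms(3) by metis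
qed

lemma frechet_derivative_cong_open:
  assumes "open S" "x \<in> S" "\<And>y. y \<in> S \<Longrightarrow> f y = g y"
  shows "frechet_derivative f (at x) = frechet_derivative g (at x)"
  unfolding frechet_derivative_def using has_derivative_cong_open[OF assms] by simp

lemma differentiable_cong_open:
  assumes "open S" "x \<in> S" "\<And>y. y \<in> S \<Longrightarrow> f y = g y"
  shows "f differentiable (at x) \<longleftrightarrow> g differentiable (at x)"
  unfolding differentiable_def using has_derivative_cong_open[OF assms] by simp

lemma iterD_cong_open:
  assumes "open S" "\<And>y. y \<in> S \<Longrightarrow> f y = g y"
  shows "x \<in> S \<Longrightarrow> iterD vs f x = iterD vs g x"
proof (induction vs arbitrary: x)
  case Nil
  then show ?case using assms by simp
next
  case (Cons v vs)
  show ?case using frechet_derivative_cong_open[OF assms(1) Cons.prems Cons.IH] by simp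
qed

lemma smooth_on_cong:
  assumes "open S" "\<And>y. y \<in> S \<Longrightarrow> f y = g y"
  shows "smooth_on S f \<longleftrightarrow> smooth_on S g"
proof -
  have "iterD vs f differentiable (at x) \<longleftrightarrow> iterD vs g differentiable (at x)" if "x \<in> S" for vs x
    using differentiable_cong_open[OF assms(1) that, of "iterD vs f" "iterD vs g"]
      iterD_cong_open[of S f g, OF assms] by blast
  then show ?thesis unfolding smooth_on_def by blast
qed

lemma smooth_on_subset: "smooth_on S f \<Longrightarrow> T \<subseteq> S \<Longrightarrow> smooth_on T f"
  unfolding smooth_on_def by blast

lemma smooth_on_imp_differentiable: "smooth_on S f \<Longrightarrow> x \<in> S \<Longrightarrow> f differentiable (at x)"
  unfolding smooth_on_def using iterD.simps(1) by metis

lemma smooth_on_frechet_derivative: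
  "smooth_on S f \<Longrightarrow> smooth_on S (\<lambda>x. frechet_derivative f (at x) v)"
  unfolding smooth_on_def by (metis iterD_snoc)

lemma smooth_on_coinduct:
  assumes "open S"
    and step: "\<And>f. P f \<Longrightarrow> \<exists>D. (\<forall>x\<in>S. (f has_derivative D x) (at x)) \<and>
                                  (\<forall>v. \<exists>g. P g \<and> (\<forall>x\<in>S. D x v = g x))"
    and "P f"
  shows "smooth_on S f"
proof -
  have step': "(\<forall>x\<in>S. f differentiable (at x)) \<and>
      (\<forall>v. \<exists>g. P g \<and> (\<forall>x\<in>S. frechet_derivative f (at x) v = g x))" if "P f" for f
    using step[OF that] differentiableI frechet_derivative_at by metis
  have "\<forall>f. P f \<longrightarrow> (\<forall>x\<in>S. iterD vs f differentiable (at x))" for vs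
  proof (induction vs rule: rev_induct)
    case Nil
    then show ?case using step' by simp
  next
    case (snoc v ws)
    show ?case
    proof (intro allI impI ballI)
      fix f x assume "P f" "x \<in> S"
      obtain g where g: "P g" "\<forall>x\<in>S. frechet_derivative f (at x) v = g x"
        using step'[OF \<open>P f\<close>] by blast
      have "iterD ws g differentiable (at x)" using snoc g \<open>x \<in> S\<close> by blast
      moreover have "\<And>y. y \<in> S \<Longrightarrow> iterD ws g y = iterD ws (\<lambda>x. frechet_derivative f (at x) v) y"
        using iterD_cong_open[OF assms(1), of g "\<lambda>x. frechet_derivative f (at x) v"] g by metis
      ultimately show "iterD (ws @ [v]) f differentiable (at x)"
        unfolding iterD_snoc using differentiable_cong_open[OF assms(1) \<open>x \<in> S\<close>] by blast
    qed
  qed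
  then show ?thesis unfolding smooth_on_def using assms(3) by blast
qed

lemma smooth_on_const: "open S \<Longrightarrow> smooth_on S (\<lambda>x. c)"
  by (rule smooth_on_coinduct[where P="\<lambda>f. \<exists>c. f = (\<lambda>x. c)"]) (auto intro!: exI[of _ "\<lambda>_ _. 0"])

lemma smooth_on_bounded_linear:
  assumes "open S" "bounded_linear L" "smooth_on S f"
  shows "smooth_on S (\<lambda>x. L (f x))"
proof (rule smooth_on_coinduct[where P="\<lambda>h. \<exists>f. smooth_on S f \<and> h = (\<lambda>x. L (f x))"])
  fix h assume "\<exists>f. smooth_on S f \<and> h = (\<lambda>x. L (f x))"
  then obtain f where f: "smooth_on S f" "h = (\<lambda>x. L (f x))" by blast
  show "\<exists>D. (\<forall>x\<in>S. (h has_derivative D x) (at x)) \<and>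
      (\<forall>v. \<exists>g. (\<exists>f. smooth_on S f \<and> g = (\<lambda>x. L (f x))) \<and> (\<forall>x\<in>S. D x v = g x))"
  proof (intro exI[of _ "\<lambda>x v. L (frechet_derivative f (at x) v)"] conjI ballI allI)
    fix x assume "x \<in> S"
    show "(h has_derivative (\<lambda>v. L (frechet_derivative f (at x) v))) (at x)"
      unfolding f(2) using bounded_linear.has_derivative[OF assms(2)
          has_derivative_frechet_derivative[OF smooth_on_imp_differentiable[OF f(1) \<open>x \<in> S\<close>]]] .
  next
    fix v show "\<exists>g. (\<exists>f. smooth_on S f \<and> g = (\<lambda>x. L (f x))) \<and>
        (\<forall>x\<in>S. L (frechet_derivative f (at x) v) = g x)"
      using smooth_on_frechet_derivative[OF f(1)] by blast
  qed
qed (use assms in auto)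

text \<open>Closure under products is proved for finite sums of products at once, since that class is
  closed under differentiation.\<close>

definition scaleR_sum :: "((R3 \<Rightarrow> real) \<times> (R3 \<Rightarrow> 'a::real_normed_vector)) list \<Rightarrow> R3 \<Rightarrow> 'a" where
  "scaleR_sum ps x = (\<Sum>(f,g)\<leftarrow>ps. f x *\<^sub>R g x)"

lemma scaleR_sum_simps [simp]:
  "scaleR_sum [] = (\<lambda>x. 0)"
  "scaleR_sum ((f,g) # ps) = (\<lambda>x. f x *\<^sub>R g x + scaleR_sum ps x)"
  "scaleR_sum (ps @ qs) x = scaleR_sum ps x + scaleR_sum qs x"
  by (auto simp: scaleR_sum_def)

lemma has_derivative_scaleR_sum:
  assumes "\<forall>(f,g)\<in>set ps. f differentiable (at x) \<and> g differentiable (at x)"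
  shows "(scaleR_sum ps has_derivative
      (\<lambda>v. scaleR_sum (map (\<lambda>(f,g). (\<lambda>y. frechet_derivative f (at y) v, g)) ps) x
         + scaleR_sum (map (\<lambda>(f,g). (f, \<lambda>y. frechet_derivative g (at y) v)) ps) x)) (at x)"
  using assms
proof (induction ps)
  case Nil
  then show ?case by simp
next
  case (Cons p ps)
  obtain f g where p: "p = (f,g)" by (cases p)
  have "f differentiable (at x)" "g differentiable (at x)" using Cons.prems p by auto
  note df = has_derivative_frechet_derivative[OF this(1)]
    and dg = has_derivative_frechet_derivative[OF this(2)]
  have "((\<lambda>x. f x *\<^sub>R g x + scaleR_sum ps x) has_derivative
     (\<lambda>v. (f x *\<^sub>R frechet_derivative g (at x) v + frechet_derivative f (at x) v *\<^sub>R g x) +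
        (scaleR_sum (map (\<lambda>(f,g). (\<lambda>y. frechet_derivative f (at y) v, g)) ps) x
         + scaleR_sum (map (\<lambda>(f,g). (f, \<lambda>y. frechet_derivative g (at y) v)) ps) x))) (at x)"
    by (intro has_derivative_add has_derivative_scaleR df dg Cons.IH) (use Cons.prems in auto)
  then show ?case using p by (simp add: algebra_simps)
qed

lemma smooth_on_scaleR_sum:
  assumes "open S" "\<forall>(f,g)\<in>set ps. smooth_on S f \<and> smooth_on S g"
  shows "smooth_on S (scaleR_sum ps)"
proof (rule smooth_on_coinduct[where P="\<lambda>h. \<exists>ps. (\<forall>(f,g)\<in>set ps. smooth_on S f \<and> smooth_on S g)
                                               \<and> (\<forall>x\<in>S. h x = scaleR_sum ps x)"])
  fix h assume "\<exists>ps. (\<forall>(f,g)\<in>set ps. smooth_on S f \<and> smooth_on S g) \<and> (\<forall>x\<in>S. h x = scaleR_sum ps x)"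
  then obtain ps where ps: "\<forall>(f,g)\<in>set ps. smooth_on S f \<and> smooth_on S g"
      "\<forall>x\<in>S. h x = scaleR_sum ps x" by blast
  have dif: "\<forall>(f,g)\<in>set ps. f differentiable (at x) \<and> g differentiable (at x)" if "x \<in> S" for x
    using ps(1) that by (auto intro: smooth_on_imp_differentiable)
  note hd = has_derivative_cong_open[OF assms(1), of _ h "scaleR_sum ps"]
  define qs where "qs v = map (\<lambda>(f,g). (\<lambda>y. frechet_derivative f (at y) v, g)) ps
      @ map (\<lambda>(f,g). (f, \<lambda>y. frechet_derivative g (at y) v)) ps" for v
  have "(h has_derivative (\<lambda>v. scaleR_sum (qs v) x)) (at x)" if "x \<in> S" for x
    using hd[OF that] ps(2) has_derivative_scaleR_sum[OF dif[OF that]] unfolding qs_def by simp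
  moreover have "\<forall>(f,g)\<in>set (qs v). smooth_on S f \<and> smooth_on S g" for v
    using ps(1) unfolding qs_def by (fastforce intro: smooth_on_frechet_derivative)
  ultimately show "\<exists>D. (\<forall>x\<in>S. (h has_derivative D x) (at x)) \<and>
      (\<forall>v. \<exists>g. (\<exists>ps. (\<forall>(f,g)\<in>set ps. smooth_on S f \<and> smooth_on S g) \<and> (\<forall>x\<in>S. g x = scaleR_sum ps x))
             \<and> (\<forall>x\<in>S. D x v = g x))"
    by (intro exI[of _ "\<lambda>x v. scaleR_sum (qs v) x"] conjI ballI allI) blast+
qed (use assms in auto)

lemma smooth_on_scaleR:
  assumes "open S" "smooth_on S f" "smooth_on S g"
  shows "smooth_on S (\<lambda>x. f x *\<^sub>R g x)"
  using smooth_on_scaleR_sum[OF assms(1), of "[(f,g)]"] assms by simp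

lemma smooth_on_mult:
  fixes f g :: "R3 \<Rightarrow> real"
  assumes "open S" "smooth_on S f" "smooth_on S g"
  shows "smooth_on S (\<lambda>x. f x * g x)"
  using smooth_on_scaleR[OF assms] by simp

lemma smooth_on_add:
  assumes "open S" "smooth_on S f" "smooth_on S g"
  shows "smooth_on S (\<lambda>x. f x + g x)"
  using smooth_on_scaleR_sum[OF assms(1), of "[(\<lambda>x. 1, f), (\<lambda>x. 1, g)]"] assms
    smooth_on_const[OF assms(1)] by auto

lemma smooth_on_minus:
  assumes "open S" "smooth_on S f"
  shows "smooth_on S (\<lambda>x. - f x)"
  using smooth_on_scaleR[OF assms(1) smooth_on_const[OF assms(1), of "-1"] assms(2)] by simp

lemma smooth_on_diff:
  assumes "open S" "smooth_on S f" "smooth_on S g"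
  shows "smooth_on S (\<lambda>x. f x - g x)"
  using smooth_on_add[OF assms(1,2) smooth_on_minus[OF assms(1,3)]] by simp

lemma smooth_on_sum:
  assumes "open S" "finite I" "\<And>i. i \<in> I \<Longrightarrow> smooth_on S (f i)"
  shows "smooth_on S (\<lambda>x. \<Sum>i\<in>I. f i x)"
  using assms(2,3)
proof (induction I rule: finite_induct)
  case empty
  then show ?case using smooth_on_const[OF assms(1)] by simp
next
  case (insert i I)
  then show ?case using smooth_on_add[OF assms(1), of "f i" "\<lambda>x. \<Sum>i\<in>I. f i x"] by simp
qed

text \<open>Likewise, closure under \<open>inverse\<close> goes through finite sums \<open>\<Sum> g\<^sub>i / f\<^sup>k\<^sup>\<^sub>i\<close>.\<close>

definition inverse_power_sum :: "(R3 \<Rightarrow> real) \<Rightarrow> ((R3 \<Rightarrow> real) \<times> nat) list \<Rightarrow> R3 \<Rightarrow> real" where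
  "inverse_power_sum f ps x = (\<Sum>(g,k)\<leftarrow>ps. g x * inverse (f x) ^ k)"

lemma inverse_power_sum_simps [simp]:
  "inverse_power_sum f [] = (\<lambda>x. 0)"
  "inverse_power_sum f ((g,k) # ps) = (\<lambda>x. g x * inverse (f x) ^ k + inverse_power_sum f ps x)"
  "inverse_power_sum f (ps @ qs) x = inverse_power_sum f ps x + inverse_power_sum f qs x"
  by (auto simp: inverse_power_sum_def)

lemma has_derivative_inverse_power_sum:
  assumes "\<forall>(g,k)\<in>set ps. g differentiable (at x)" "f differentiable (at x)" "f x \<noteq> 0"
  shows "(inverse_power_sum f ps has_derivative
      (\<lambda>v. inverse_power_sum f (map (\<lambda>(g,k). (\<lambda>y. frechet_derivative g (at y) v, k)) ps) x
         + inverse_power_sum f (map (\<lambda>(g,k). (\<lambda>y. - real k * g y * frechet_derivative f (at y) v, k + 1)) ps) x))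
    (at x)"
  using assms(1)
proof (induction ps)
  case Nil
  then show ?case by simp
next
  case (Cons p ps)
  obtain g k where p: "p = (g,k)" by (cases p)
  have dg: "(g has_derivative frechet_derivative g (at x)) (at x)"
    using Cons.prems p has_derivative_frechet_derivative by auto
  note df = has_derivative_frechet_derivative[OF assms(2)]
  have "((\<lambda>x. g x * inverse (f x) ^ k + inverse_power_sum f ps x) has_derivative
     (\<lambda>v. (g x * (real k * (- (inverse (f x) * frechet_derivative f (at x) v * inverse (f x)))
               * inverse (f x) ^ (k - 1))
          + frechet_derivative g (at x) v * inverse (f x) ^ k) +
        (inverse_power_sum f (map (\<lambda>(g,k). (\<lambda>y. frechet_derivative g (at y) v, k)) ps) x
         + inverse_power_sum f (map (\<lambda>(g,k). (\<lambda>y. - real k * g y * frechet_derivative f (at y) v, k + 1)) ps) x)))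
     (at x)"
    using Cons.prems
    by (intro has_derivative_add[OF has_derivative_mult[OF dg
          has_derivative_power[OF Deriv.has_derivative_inverse[OF assms(3) df]]] Cons.IH]) auto
  then show ?case unfolding p inverse_power_sum_simps(2)
    by (elim has_derivative_eq_rhs) (cases k, auto simp: fun_eq_iff algebra_simps)
qed

lemma smooth_on_inverse_power_sum:
  assumes "open S" "smooth_on S f" "\<forall>x\<in>S. f x \<noteq> 0" "\<forall>(g,k)\<in>set ps. smooth_on S g"
  shows "smooth_on S (inverse_power_sum f ps)"
proof (rule smooth_on_coinduct[where P="\<lambda>h. \<exists>ps. (\<forall>(g,k)\<in>set ps. smooth_on S g)
                                               \<and> (\<forall>x\<in>S. h x = inverse_power_sum f ps x)"])
  fix h assume "\<exists>ps. (\<forall>(g,k)\<in>set ps. smooth_on S g) \<and> (\<forall>x\<in>S. h x = inverse_power_sum f ps x)"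
  then obtain ps where ps: "\<forall>(g,k)\<in>set ps. smooth_on S g" "\<forall>x\<in>S. h x = inverse_power_sum f ps x"
    by blast
  have dif: "\<forall>(g,k)\<in>set ps. g differentiable (at x)" if "x \<in> S" for x
    using ps(1) that by (auto intro: smooth_on_imp_differentiable)
  have dfx: "f differentiable (at x)" "f x \<noteq> 0" if "x \<in> S" for x
    using smooth_on_imp_differentiable[OF assms(2) that] assms(3) that by auto
  note hd = has_derivative_cong_open[OF assms(1), of _ h "inverse_power_sum f ps"]
  define qs where "qs v = map (\<lambda>(g,k). (\<lambda>y. frechet_derivative g (at y) v, k)) ps
      @ map (\<lambda>(g,k). (\<lambda>y. - real k * g y * frechet_derivative f (at y) v, k + 1)) ps" for v
  have "(h has_derivative (\<lambda>v. inverse_power_sum f (qs v) x)) (at x)" if "x \<in> S" for x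
    using hd[OF that] ps(2) has_derivative_inverse_power_sum[OF dif[OF that] dfx[OF that]]
    unfolding qs_def by simp
  moreover have "\<forall>(g,k)\<in>set (qs v). smooth_on S g" for v
    using ps(1) unfolding qs_def
    by (fastforce intro: smooth_on_frechet_derivative smooth_on_minus smooth_on_mult smooth_on_const
        assms(1,2))
  ultimately show "\<exists>D. (\<forall>x\<in>S. (h has_derivative D x) (at x)) \<and>
      (\<forall>v. \<exists>g. (\<exists>ps. (\<forall>(g,k)\<in>set ps. smooth_on S g) \<and> (\<forall>x\<in>S. g x = inverse_power_sum f ps x))
             \<and> (\<forall>x\<in>S. D x v = g x))"
    by (intro exI[of _ "\<lambda>x v. inverse_power_sum f (qs v) x"] conjI ballI allI) blast+
qed (use assms in auto)

lemma smooth_on_divide: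
  fixes f g :: "R3 \<Rightarrow> real"
  assumes "open S" "smooth_on S g" "smooth_on S f" "\<forall>x\<in>S. f x \<noteq> 0"
  shows "smooth_on S (\<lambda>x. g x / f x)"
  using smooth_on_inverse_power_sum[OF assms(1,3,4), of "[(g, 1)]"] assms(2)
  by (simp add: divide_inverse)


section \<open>Rules for Frechet derivatives at a point\<close>

lemma frechet_derivative_add:
  "f differentiable (at x) \<Longrightarrow> g differentiable (at x) \<Longrightarrow>
   frechet_derivative (\<lambda>y. f y + g y) (at x) v = frechet_derivative f (at x) v + frechet_derivative g (at x) v"
  by (subst frechet_derivative_at[OF has_derivative_add[OF has_derivative_frechet_derivative
        has_derivative_frechet_derivative], symmetric]) auto

lemma frechet_derivative_diff:
  "f differentiable (at x) \<Longrightarrow> g differentiable (at x) \<Longrightarrow>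
   frechet_derivative (\<lambda>y. f y - g y) (at x) v = frechet_derivative f (at x) v - frechet_derivative g (at x) v"
  by (subst frechet_derivative_at[OF has_derivative_diff[OF has_derivative_frechet_derivative
        has_derivative_frechet_derivative], symmetric]) auto

lemma frechet_derivative_minus:
  "f differentiable (at x) \<Longrightarrow>
   frechet_derivative (\<lambda>y. - f y) (at x) v = - frechet_derivative f (at x) v"
  by (subst frechet_derivative_at[OF has_derivative_minus[OF has_derivative_frechet_derivative],
        symmetric]) auto

lemma frechet_derivative_scaleR:
  fixes f :: "R3 \<Rightarrow> real"
  shows "f differentiable (at x) \<Longrightarrow> g differentiable (at x) \<Longrightarrow>
   frechet_derivative (\<lambda>y. f y *\<^sub>R g y) (at x) v
     = frechet_derivative f (at x) v *\<^sub>R g x + f x *\<^sub>R frechet_derivative g (at x) v"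
  by (subst frechet_derivative_at[OF has_derivative_scaleR[OF has_derivative_frechet_derivative
        has_derivative_frechet_derivative], symmetric]) auto

lemma frechet_derivative_mult:
  fixes f g :: "R3 \<Rightarrow> real"
  shows "f differentiable (at x) \<Longrightarrow> g differentiable (at x) \<Longrightarrow>
   frechet_derivative (\<lambda>y. f y * g y) (at x) v
     = frechet_derivative f (at x) v * g x + f x * frechet_derivative g (at x) v"
  using frechet_derivative_scaleR[of f x g v] by simp

lemma frechet_derivative_bounded_linear:
  "bounded_linear L \<Longrightarrow> f differentiable (at x) \<Longrightarrow>
   frechet_derivative (\<lambda>y. L (f y)) (at x) v = L (frechet_derivative f (at x) v)"
  by (subst frechet_derivative_at[OF bounded_linear.has_derivative[OF _
        has_derivative_frechet_derivative], symmetric]) auto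

lemma frechet_derivative_vec_nth:
  fixes f :: "R3 \<Rightarrow> R3"
  shows "f differentiable (at x) \<Longrightarrow>
    frechet_derivative (\<lambda>y. f y $ i) (at x) v = frechet_derivative f (at x) v $ i"
  using frechet_derivative_bounded_linear[OF bounded_linear_vec_nth] by blast

lemma frechet_derivative_sum:
  "finite I \<Longrightarrow> (\<And>i. i \<in> I \<Longrightarrow> f i differentiable (at x)) \<Longrightarrow>
   frechet_derivative (\<lambda>y. \<Sum>i\<in>I. f i y) (at x) v = (\<Sum>i\<in>I. frechet_derivative (f i) (at x) v)"
  by (subst frechet_derivative_at[OF has_derivative_sum[OF has_derivative_frechet_derivative, of I f x],
        symmetric]) auto

lemma frechet_derivative_locally_const:
  assumes "open S" "x \<in> S" "\<And>y. y \<in> S \<Longrightarrow> f y = c"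
  shows "frechet_derivative f (at x) v = 0"
  using frechet_derivative_cong_open[OF assms(1,2), of f "\<lambda>y. c"] assms(3) by simp

lemma linear_Basis_expansion:
  fixes L :: "'a::euclidean_space \<Rightarrow> 'b::real_vector"
  assumes "linear L"
  shows "L z = (\<Sum>b\<in>Basis. (z \<bullet> b) *\<^sub>R L b)"
proof -
  have "L z = L (\<Sum>b\<in>Basis. (z \<bullet> b) *\<^sub>R b)" by (simp add: euclidean_representation)
  also have "\<dots> = (\<Sum>b\<in>Basis. (z \<bullet> b) *\<^sub>R L b)"
    using assms by (simp add: linear_sum linear_scale)
  finally show ?thesis .
qed

lemma mvt_along_line:
  fixes h :: "R3 \<Rightarrow> real"
  assumes "0 < t" "\<And>s. 0 \<le> s \<Longrightarrow> s \<le> t \<Longrightarrow> h differentiable (at (a + s *\<^sub>R u))"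
  shows "\<exists>\<xi>. 0 < \<xi> \<and> \<xi> < t \<and> h (a + t *\<^sub>R u) - h a = t * frechet_derivative h (at (a + \<xi> *\<^sub>R u)) u"
proof -
  have d: "((\<lambda>s. h (a + s *\<^sub>R u)) has_derivative
      (\<lambda>d. frechet_derivative h (at (a + s *\<^sub>R u)) (d *\<^sub>R u))) (at s within {0..t})"
    if "0 \<le> s" "s \<le> t" for s
  proof -
    have "((\<lambda>s. a + s *\<^sub>R u) has_derivative (\<lambda>d. d *\<^sub>R u)) (at s within {0..t})"
      by (auto intro!: derivative_eq_intros)
    then show ?thesis
      using has_derivative_compose has_derivative_frechet_derivative[OF assms(2)[OF that]] by blast
  qed
  obtain \<xi> where "\<xi> \<in> {0<..<t}"
      "h (a + t *\<^sub>R u) - h (a + 0 *\<^sub>R u) = frechet_derivative h (at (a + \<xi> *\<^sub>R u)) ((t - 0) *\<^sub>R u)"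
    using mvt_simple[OF assms(1) d] by blast
  moreover have "frechet_derivative h (at (a + \<xi> *\<^sub>R u)) ((t - 0) *\<^sub>R u)
      = t * frechet_derivative h (at (a + \<xi> *\<^sub>R u)) u"
    using linear_scale[OF linear_frechet_derivative[OF assms(2)]] \<open>\<xi> \<in> {0<..<t}\<close> by simp
  ultimately show ?thesis by auto
qed


section \<open>Determinants and coordinates in \<open>\<real>\<^sup>3\<close>\<close>

definition det3 :: "R3 \<Rightarrow> R3 \<Rightarrow> R3 \<Rightarrow> real" where
  "det3 u v w = u$1*(v$2*w$3 - v$3*w$2) - u$2*(v$1*w$3 - v$3*w$1) + u$3*(v$1*w$2 - v$2*w$1)"

lemma det3_right_simps:
  "det3 u v (z + z') = det3 u v z + det3 u v z'"
  "det3 u v (z - z') = det3 u v z - det3 u v z'"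
  "det3 u v (- z) = - det3 u v z"
  "det3 u v (c *\<^sub>R z) = c * det3 u v z"
  "det3 u v u = 0"
  "det3 u v v = 0"
  by (simp_all add: det3_def algebra_simps)

lemma det3_nonzero_if_lin_indep3:
  assumes "lin_indep3 u v w"
  shows "det3 u v w \<noteq> 0"
proof -
  define f where "f = (\<lambda>x::real^3. (x$1) *\<^sub>R u + (x$2) *\<^sub>R v + (x$3) *\<^sub>R w)"
  have lin: "linear f" unfolding f_def
    by (rule linearI) (simp_all add: algebra_simps)
  have "inj f"
  proof (rule injI)
    fix x y assume "f x = f y"
    then have "(x$1 - y$1) *\<^sub>R u + (x$2 - y$2) *\<^sub>R v + (x$3 - y$3) *\<^sub>R w = 0"
      unfolding f_def by (simp add: algebra_simps)
    then have "x$1 - y$1 = 0 \<and> x$2 - y$2 = 0 \<and> x$3 - y$3 = 0"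
      using assms unfolding lin_indep3_def by blast
    then show "x = y" by (simp add: vec_eq_iff forall_3)
  qed
  then have "det (matrix f) \<noteq> 0" using det_nz_iff_inj[OF lin] by simp
  moreover have "det (matrix f) = det3 u v w"
    unfolding det_3 matrix_def f_def det3_def by (simp add: axis_def algebra_simps)
  ultimately show ?thesis by simp
qed

lemma lin_indep3_if_det3_nonzero:
  assumes "det3 u v w \<noteq> 0"
  shows "lin_indep3 u v w"
  unfolding lin_indep3_def
proof (intro allI impI)
  fix a b c assume h: "a *\<^sub>R u + b *\<^sub>R v + c *\<^sub>R w = 0"
  have "det3 (a *\<^sub>R u + b *\<^sub>R v + c *\<^sub>R w) v w = a * det3 u v w"
       "det3 u (a *\<^sub>R u + b *\<^sub>R v + c *\<^sub>R w) w = b * det3 u v w"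
       "det3 u v (a *\<^sub>R u + b *\<^sub>R v + c *\<^sub>R w) = c * det3 u v w"
    unfolding det3_def by (simp_all add: algebra_simps)
  then show "a = 0 \<and> b = 0 \<and> c = 0" using h assms by (simp add: det3_def)
qed

lemma cramer3:
  assumes "det3 u v w \<noteq> 0"
  shows "z = (det3 z v w / det3 u v w) *\<^sub>R u + (det3 u z w / det3 u v w) *\<^sub>R v
           + (det3 u v z / det3 u v w) *\<^sub>R w"
proof -
  have "det3 u v w *\<^sub>R z = det3 z v w *\<^sub>R u + det3 u z w *\<^sub>R v + det3 u v z *\<^sub>R w"
    unfolding det3_def by (simp add: vec_eq_iff forall_3 algebra_simps)
  moreover have "z = (1 / det3 u v w) *\<^sub>R (det3 u v w *\<^sub>R z)" using assms by simp
  ultimately have "z = (1 / det3 u v w) *\<^sub>R (det3 z v w *\<^sub>R u + det3 u z w *\<^sub>R v + det3 u v z *\<^sub>R w)"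
    by simp
  then show ?thesis by (simp add: scaleR_add_right)
qed

lemma coords_eqI:
  assumes "lin_indep3 u v w" "z = a *\<^sub>R u + b *\<^sub>R v + c *\<^sub>R w"
  shows "coords u v w z = (a, b, c)"
  unfolding coords_def
proof (rule the_equality)
  fix abc assume h: "z = fst abc *\<^sub>R u + fst (snd abc) *\<^sub>R v + snd (snd abc) *\<^sub>R w"
  obtain a' b' c' where abc: "abc = (a',b',c')" by (cases abc) auto
  have "(a' - a) *\<^sub>R u + (b' - b) *\<^sub>R v + (c' - c) *\<^sub>R w = 0"
    using h assms(2) unfolding abc by (simp add: algebra_simps)
  then have "a' - a = 0 \<and> b' - b = 0 \<and> c' - c = 0" using assms(1) unfolding lin_indep3_def by blast
  then show "abc = (a, b, c)" using abc by simp
qed (use assms in simp)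

lemma coords_eq_cramer3:
  assumes "lin_indep3 u v w"
  shows "coords u v w z
     = (det3 z v w / det3 u v w, det3 u z w / det3 u v w, det3 u v z / det3 u v w)"
  using coords_eqI[OF assms cramer3[OF det3_nonzero_if_lin_indep3[OF assms]]] .

lemma coords_boost_shear:
  assumes li: "lin_indep3 u v w" and ab: "a * a - b * b = 1"
  shows "lin_indep3 (a *\<^sub>R u + b *\<^sub>R v) (b *\<^sub>R u + a *\<^sub>R v) (w + r *\<^sub>R u + s *\<^sub>R v)"
    and "snd (snd (coords (a *\<^sub>R u + b *\<^sub>R v) (b *\<^sub>R u + a *\<^sub>R v) (w + r *\<^sub>R u + s *\<^sub>R v) z))
       = snd (snd (coords u v w z))"
proof -
  show li': "lin_indep3 (a *\<^sub>R u + b *\<^sub>R v) (b *\<^sub>R u + a *\<^sub>R v) (w + r *\<^sub>R u + s *\<^sub>R v)"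
    unfolding lin_indep3_def
  proof (intro allI impI)
    fix x y c
    assume "x *\<^sub>R (a *\<^sub>R u + b *\<^sub>R v) + y *\<^sub>R (b *\<^sub>R u + a *\<^sub>R v) + c *\<^sub>R (w + r *\<^sub>R u + s *\<^sub>R v) = 0"
    then have "(x * a + y * b + c * r) *\<^sub>R u + (x * b + y * a + c * s) *\<^sub>R v + c *\<^sub>R w = 0"
      by (simp add: algebra_simps)
    then have h: "x * a + y * b + c * r = 0" "x * b + y * a + c * s = 0" "c = 0"
      using li unfolding lin_indep3_def by blast+
    have "x = 0" "y = 0" using ab h by algebra+
    then show "x = 0 \<and> y = 0 \<and> c = 0" using h by simp
  qed
  obtain A B C where abc: "coords u v w z = (A, B, C)" by (cases "coords u v w z") auto
  have z: "z = A *\<^sub>R u + B *\<^sub>R v + C *\<^sub>R w"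
    using cramer3[OF det3_nonzero_if_lin_indep3[OF li], of z] abc coords_eq_cramer3[OF li] by simp
  have "z = (a * (A - C * r) - b * (B - C * s)) *\<^sub>R (a *\<^sub>R u + b *\<^sub>R v)
          + (a * (B - C * s) - b * (A - C * r)) *\<^sub>R (b *\<^sub>R u + a *\<^sub>R v) + C *\<^sub>R (w + r *\<^sub>R u + s *\<^sub>R v)"
  proof -
    have "(a * (A - C * r) - b * (B - C * s)) *\<^sub>R (a *\<^sub>R u + b *\<^sub>R v)
          + (a * (B - C * s) - b * (A - C * r)) *\<^sub>R (b *\<^sub>R u + a *\<^sub>R v) + C *\<^sub>R (w + r *\<^sub>R u + s *\<^sub>R v)
        = ((a * a - b * b) * (A - C * r) + C * r) *\<^sub>R u + ((a * a - b * b) * (B - C * s) + C * s) *\<^sub>R v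
          + C *\<^sub>R w"
      by (simp add: algebra_simps)
    also have "\<dots> = z" unfolding ab z by simp
    finally show ?thesis by simp
  qed
  then show "snd (snd (coords (a *\<^sub>R u + b *\<^sub>R v) (b *\<^sub>R u + a *\<^sub>R v) (w + r *\<^sub>R u + s *\<^sub>R v) z))
      = snd (snd (coords u v w z))"
    using coords_eqI[OF li'] abc by simp
qed

lemma smooth_on_det3:
  assumes "open S" "smooth_on S u" "smooth_on S v" "smooth_on S w"
  shows "smooth_on S (\<lambda>x. det3 (u x) (v x) (w x))"
  unfolding det3_def
  by (intro smooth_on_add smooth_on_diff smooth_on_mult smooth_on_bounded_linear[OF _ bounded_linear_vec_nth]
      assms)

lemma differentiable_det3:
  fixes u v w :: "R3 \<Rightarrow> R3"
  assumes "u differentiable (at x)" "v differentiable (at x)" "w differentiable (at x)"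
  shows "(\<lambda>x. det3 (u x) (v x) (w x)) differentiable (at x)"
proof -
  have c: "(\<lambda>x. f x $ i) differentiable (at x)" if "f differentiable (at x)" for f :: "R3 \<Rightarrow> R3" and i
    using bounded_linear.has_derivative[OF bounded_linear_vec_nth has_derivative_frechet_derivative[OF that]]
      differentiableI by blast
  show ?thesis unfolding det3_def
    by (intro differentiable_add differentiable_diff differentiable_mult c assms)
qed


section \<open>Lie brackets of vector fields\<close>

lemma lie_cong_open:
  assumes "open S" "x \<in> S" "\<And>y. y \<in> S \<Longrightarrow> X y = X' y" "\<And>y. y \<in> S \<Longrightarrow> Y y = Y' y"
  shows "lie X Y x = lie X' Y' x"
proof -
  have "frechet_derivative X (at x) = frechet_derivative X' (at x)"
    "frechet_derivative Y (at x) = frechet_derivative Y' (at x)"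
    using frechet_derivative_cong_open[OF assms(1,2)] assms(3,4) by blast+
  then show ?thesis unfolding lie_def using assms(2-4) by simp
qed

lemma lie_self: "lie X X x = 0"
  by (simp add: lie_def)

lemma lie_antisym: "lie X Y x = - lie Y X x"
  by (simp add: lie_def)

lemma lie_add_left:
  assumes "X differentiable (at x)" "X' differentiable (at x)" "Y differentiable (at x)"
  shows "lie (\<lambda>y. X y + X' y) Y x = lie X Y x + lie X' Y x"
  unfolding lie_def frechet_derivative_add[OF assms(1,2)] linear_add[OF linear_frechet_derivative[OF assms(3)]]
  by (simp add: algebra_simps)

lemma lie_add_right:
  assumes "X differentiable (at x)" "Y differentiable (at x)" "Y' differentiable (at x)"
  shows "lie X (\<lambda>y. Y y + Y' y) x = lie X Y x + lie X Y' x"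
  unfolding lie_def frechet_derivative_add[OF assms(2,3)] linear_add[OF linear_frechet_derivative[OF assms(1)]]
  by (simp add: algebra_simps)

lemma lie_minus_left:
  assumes "X differentiable (at x)" "Y differentiable (at x)"
  shows "lie (\<lambda>y. - X y) Y x = - lie X Y x"
  unfolding lie_def frechet_derivative_minus[OF assms(1)] linear_neg[OF linear_frechet_derivative[OF assms(2)]]
  by (simp add: algebra_simps)

lemma lie_scaleR_left:
  fixes f :: "R3 \<Rightarrow> real"
  assumes "f differentiable (at x)" "X differentiable (at x)" "Y differentiable (at x)"
  shows "lie (\<lambda>y. f y *\<^sub>R X y) Y x = f x *\<^sub>R lie X Y x - frechet_derivative f (at x) (Y x) *\<^sub>R X x"
  unfolding lie_def frechet_derivative_scaleR[OF assms(1,2)]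
    linear_scale[OF linear_frechet_derivative[OF assms(3)]]
  by (simp add: algebra_simps)

lemma lie_scaleR_right:
  fixes f :: "R3 \<Rightarrow> real"
  assumes "f differentiable (at x)" "X differentiable (at x)" "Y differentiable (at x)"
  shows "lie X (\<lambda>y. f y *\<^sub>R Y y) x = f x *\<^sub>R lie X Y x + frechet_derivative f (at x) (X x) *\<^sub>R Y x"
  unfolding lie_def frechet_derivative_scaleR[OF assms(1,3)]
    linear_scale[OF linear_frechet_derivative[OF assms(2)]]
  by (simp add: algebra_simps)

lemma lie_linear_combination:
  fixes f1 g1 f2 g2 :: "R3 \<Rightarrow> real" and A B :: "R3 \<Rightarrow> R3"
  assumes d: "f1 differentiable (at x)" "g1 differentiable (at x)" "f2 differentiable (at x)"
    "g2 differentiable (at x)" "A differentiable (at x)" "B differentiable (at x)"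
  shows "lie (\<lambda>y. f1 y *\<^sub>R A y + g1 y *\<^sub>R B y) (\<lambda>y. f2 y *\<^sub>R A y + g2 y *\<^sub>R B y) x
    = (f1 x * g2 x - g1 x * f2 x) *\<^sub>R lie A B x
    + (f1 x * frechet_derivative f2 (at x) (A x) + g1 x * frechet_derivative f2 (at x) (B x)
       - f2 x * frechet_derivative f1 (at x) (A x) - g2 x * frechet_derivative f1 (at x) (B x)) *\<^sub>R A x
    + (f1 x * frechet_derivative g2 (at x) (A x) + g1 x * frechet_derivative g2 (at x) (B x)
       - f2 x * frechet_derivative g1 (at x) (A x) - g2 x * frechet_derivative g1 (at x) (B x)) *\<^sub>R B x"
proof -
  note dA = differentiable_scaleR[OF d(1,5)] differentiable_scaleR[OF d(3,5)]
    and dB = differentiable_scaleR[OF d(2,6)] differentiable_scaleR[OF d(4,6)]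
  have dY: "(\<lambda>y. f2 y *\<^sub>R A y + g2 y *\<^sub>R B y) differentiable (at x)"
    by (intro differentiable_add dA(2) dB(2))
  have lA: "lie A (\<lambda>y. f2 y *\<^sub>R A y + g2 y *\<^sub>R B y) x = frechet_derivative f2 (at x) (A x) *\<^sub>R A x
      + g2 x *\<^sub>R lie A B x + frechet_derivative g2 (at x) (A x) *\<^sub>R B x"
    unfolding lie_add_right[OF d(5) dA(2) dB(2)] lie_scaleR_right[OF d(3,5,5)] lie_scaleR_right[OF d(4,5,6)]
    by (simp add: lie_self)
  have lB: "lie B (\<lambda>y. f2 y *\<^sub>R A y + g2 y *\<^sub>R B y) x = - f2 x *\<^sub>R lie A B x
      + frechet_derivative f2 (at x) (B x) *\<^sub>R A x + frechet_derivative g2 (at x) (B x) *\<^sub>R B x"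
    unfolding lie_add_right[OF d(6) dA(2) dB(2)] lie_scaleR_right[OF d(3,6,5)] lie_scaleR_right[OF d(4,6,6)]
    by (simp add: lie_self lie_antisym[of B A])
  have lin: "frechet_derivative f (at x) (f2 x *\<^sub>R A x + g2 x *\<^sub>R B x)
      = f2 x * frechet_derivative f (at x) (A x) + g2 x * frechet_derivative f (at x) (B x)"
    if "f differentiable (at x)" for f :: "R3 \<Rightarrow> real"
    using linear_add[OF linear_frechet_derivative[OF that]] linear_scale[OF linear_frechet_derivative[OF that]]
    by simp
  show ?thesis
    unfolding lie_add_left[OF dA(1) dB(1) dY] lie_scaleR_left[OF d(1,5) dY] lie_scaleR_left[OF d(2,6) dY]
      lA lB lin[OF d(1)] lin[OF d(2)]
    by (simp add: algebra_simps)
qed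

lemma smooth_on_lie:
  assumes "open S" "smooth_on S X" "smooth_on S Y"
  shows "smooth_on S (lie X Y)"
proof -
  define G where "G = (\<lambda>y. (\<Sum>b\<in>Basis. (X y \<bullet> b) *\<^sub>R frechet_derivative Y (at y) b)
        - (\<Sum>b\<in>Basis. (Y y \<bullet> b) *\<^sub>R frechet_derivative X (at y) b))"
  have eq: "lie X Y y = G y" if "y \<in> S" for y
    unfolding lie_def G_def
      linear_Basis_expansion[OF linear_frechet_derivative[OF smooth_on_imp_differentiable[OF assms(3) that]],
        of "X y"]
      linear_Basis_expansion[OF linear_frechet_derivative[OF smooth_on_imp_differentiable[OF assms(2) that]],
        of "Y y"] ..
  have "smooth_on S G" unfolding G_def
    by (intro smooth_on_diff smooth_on_sum smooth_on_scaleR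
        smooth_on_bounded_linear[OF _ bounded_linear_inner_left] smooth_on_frechet_derivative assms finite_Basis)
  then show ?thesis using smooth_on_cong[OF assms(1) eq] by simp
qed

subsection \<open>Symmetry of second derivatives and the Jacobi identity\<close>

lemma second_difference_mvt:
  fixes f :: "R3 \<Rightarrow> real"
  assumes sf: "smooth_on S f" and t: "0 < t"
    and square: "\<And>a b. 0 \<le> a \<Longrightarrow> a \<le> t \<Longrightarrow> 0 \<le> b \<Longrightarrow> b \<le> t \<Longrightarrow> p + a *\<^sub>R v + b *\<^sub>R w \<in> S"
  shows "\<exists>\<xi> \<eta>. 0 < \<xi> \<and> \<xi> < t \<and> 0 < \<eta> \<and> \<eta> < t \<and>
     f (p + t *\<^sub>R v + t *\<^sub>R w) - f (p + t *\<^sub>R v) - f (p + t *\<^sub>R w) + f p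
       = t * t * frechet_derivative (\<lambda>y. frechet_derivative f (at y) v) (at (p + \<xi> *\<^sub>R v + \<eta> *\<^sub>R w)) w"
proof -
  define H where "H = (\<lambda>y. f (y + t *\<^sub>R w) - f y)"
  define g where "g = (\<lambda>y. frechet_derivative f (at y) v)"
  have dH: "(H has_derivative (\<lambda>d. frechet_derivative f (at (p + s *\<^sub>R v + t *\<^sub>R w)) d
      - frechet_derivative f (at (p + s *\<^sub>R v)) d)) (at (p + s *\<^sub>R v))"
    if "0 \<le> s" "s \<le> t" for s
  proof -
    have "f differentiable (at (p + s *\<^sub>R v + t *\<^sub>R w))" "f differentiable (at (p + s *\<^sub>R v))"
      using smooth_on_imp_differentiable[OF sf] square[of s t] square[of s 0] t that by auto
    moreover have "((\<lambda>y. f (y + t *\<^sub>R w)) has_derivative frechet_derivative f (at (p + s *\<^sub>R v + t *\<^sub>R w)))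
        (at (p + s *\<^sub>R v))"
      using has_derivative_compose[OF has_derivative_add[OF has_derivative_ident has_derivative_const]
          has_derivative_frechet_derivative[OF calculation(1)]] by simp
    ultimately show ?thesis unfolding H_def by (intro has_derivative_diff has_derivative_frechet_derivative)
  qed
  obtain \<xi> where \<xi>: "0 < \<xi>" "\<xi> < t"
      "H (p + t *\<^sub>R v) - H p = t * frechet_derivative H (at (p + \<xi> *\<^sub>R v)) v"
    using mvt_along_line[OF t, of H p v] differentiableI[OF dH] by blast
  have "H (p + t *\<^sub>R v) - H p = t * (g (p + \<xi> *\<^sub>R v + t *\<^sub>R w) - g (p + \<xi> *\<^sub>R v))"
    unfolding \<xi>(3) g_def using frechet_derivative_at[OF dH[of \<xi>], symmetric] \<xi> by simp
  moreover obtain \<eta> where \<eta>: "0 < \<eta>" "\<eta> < t" "g (p + \<xi> *\<^sub>R v + t *\<^sub>R w) - g (p + \<xi> *\<^sub>R v)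
      = t * frechet_derivative g (at (p + \<xi> *\<^sub>R v + \<eta> *\<^sub>R w)) w"
    using mvt_along_line[OF t, of g "p + \<xi> *\<^sub>R v" w] square[of \<xi>] \<xi>
      smooth_on_imp_differentiable[OF smooth_on_frechet_derivative[OF sf]] unfolding g_def by auto
  moreover have "f (p + t *\<^sub>R v + t *\<^sub>R w) - f (p + t *\<^sub>R v) - f (p + t *\<^sub>R w) + f p = H (p + t *\<^sub>R v) - H p"
    unfolding H_def by simp
  ultimately show ?thesis using \<xi>(1,2) unfolding g_def by (intro exI[of _ \<xi>] exI[of _ \<eta>]) simp
qed

lemma frechet_derivative_commute:
  fixes f :: "R3 \<Rightarrow> real"
  assumes S: "open S" "smooth_on S f" "p \<in> S"
  shows "frechet_derivative (\<lambda>y. frechet_derivative f (at y) v) (at p) w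
       = frechet_derivative (\<lambda>y. frechet_derivative f (at y) w) (at p) v"
proof (rule ccontr)
  define k where "k v w y = frechet_derivative (\<lambda>y. frechet_derivative f (at y) v) (at y) w" for v w y
  assume "\<not> ?thesis"
  then have e: "\<bar>k v w p - k w v p\<bar> / 2 > 0" unfolding k_def by simp
  have "continuous (at p) (k v w)" for v w
    unfolding k_def using S by (intro differentiable_imp_continuous_within smooth_on_imp_differentiable
        smooth_on_frechet_derivative)
  then have "\<exists>d>0. \<forall>q. dist q p < d \<longrightarrow> dist (k v w q) (k v w p) < \<bar>k v w p - k w v p\<bar> / 2"
    "\<exists>d>0. \<forall>q. dist q p < d \<longrightarrow> dist (k w v q) (k w v p) < \<bar>k v w p - k w v p\<bar> / 2"
    using e unfolding continuous_at_eps_delta by blast+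
  then obtain d1 d2 where d: "d1 > 0" "\<And>q. dist q p < d1 \<Longrightarrow> dist (k v w q) (k v w p) < \<bar>k v w p - k w v p\<bar> / 2"
      "d2 > 0" "\<And>q. dist q p < d2 \<Longrightarrow> dist (k w v q) (k w v p) < \<bar>k v w p - k w v p\<bar> / 2"
    by blast
  obtain r where r: "r > 0" "ball p r \<subseteq> S" using S(1,3) open_contains_ball by blast
  define C where "C = norm v + norm w + 1"
  define t where "t = min (min d1 d2) r / (2 * C)"
  have C: "C > 0" unfolding C_def by (simp add: add_nonneg_pos)
  have t: "0 < t" "t * C < r" "t * C < d1" "t * C < d2"
    unfolding t_def using C r d by (auto simp: field_simps min_def)
  have near: "dist (p + a *\<^sub>R v + b *\<^sub>R w) p < min (min d1 d2) r"
    if "0 \<le> a" "a \<le> t" "0 \<le> b" "b \<le> t" for a b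
  proof -
    have "norm (a *\<^sub>R v + b *\<^sub>R w) \<le> a * norm v + b * norm w"
      using norm_triangle_ineq[of "a *\<^sub>R v" "b *\<^sub>R w"] that by simp
    also have "\<dots> \<le> t * norm v + t * norm w" using that by (intro add_mono mult_right_mono) auto
    also have "\<dots> < t * C" using t(1) unfolding C_def by (simp add: algebra_simps)
    finally show ?thesis using t by (simp add: dist_norm add.assoc)
  qed
  have square: "p + a *\<^sub>R v + b *\<^sub>R w \<in> S" "p + a *\<^sub>R w + b *\<^sub>R v \<in> S"
    if "0 \<le> a" "a \<le> t" "0 \<le> b" "b \<le> t" for a b
    using near[OF that] near[OF that(3,4,1,2)] r(2) by (auto simp: dist_commute add_ac)
  obtain \<xi> \<eta> where 1: "0 < \<xi>" "\<xi> < t" "0 < \<eta>" "\<eta> < t"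
      "f (p + t *\<^sub>R v + t *\<^sub>R w) - f (p + t *\<^sub>R v) - f (p + t *\<^sub>R w) + f p
       = t * t * k v w (p + \<xi> *\<^sub>R v + \<eta> *\<^sub>R w)"
    using second_difference_mvt[OF S(2) t(1) square(1)] unfolding k_def by blast
  obtain \<xi>' \<eta>' where 2: "0 < \<xi>'" "\<xi>' < t" "0 < \<eta>'" "\<eta>' < t"
      "f (p + t *\<^sub>R w + t *\<^sub>R v) - f (p + t *\<^sub>R w) - f (p + t *\<^sub>R v) + f p
       = t * t * k w v (p + \<xi>' *\<^sub>R w + \<eta>' *\<^sub>R v)"
    using second_difference_mvt[OF S(2) t(1) square(2)] unfolding k_def by blast
  have "f (p + t *\<^sub>R w + t *\<^sub>R v) = f (p + t *\<^sub>R v + t *\<^sub>R w)" by (simp add: add_ac)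
  then have "t * t * k v w (p + \<xi> *\<^sub>R v + \<eta> *\<^sub>R w) = t * t * k w v (p + \<xi>' *\<^sub>R w + \<eta>' *\<^sub>R v)"
    using 1(5) 2(5) by linarith
  then have "k v w (p + \<xi> *\<^sub>R v + \<eta> *\<^sub>R w) = k w v (p + \<xi>' *\<^sub>R w + \<eta>' *\<^sub>R v)"
    using t(1) by simp
  moreover have "dist (k v w (p + \<xi> *\<^sub>R v + \<eta> *\<^sub>R w)) (k v w p) < \<bar>k v w p - k w v p\<bar> / 2"
    using d(2) near[of \<xi> \<eta>] 1 by simp
  moreover have "dist (k w v (p + \<xi>' *\<^sub>R w + \<eta>' *\<^sub>R v)) (k w v p) < \<bar>k v w p - k w v p\<bar> / 2"
    using d(4) near[of \<eta>' \<xi>'] 2 by (simp add: add_ac)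
  ultimately show False unfolding dist_real_def by (simp add: abs_less_iff abs_if split: if_splits)
qed


lemma frechet_derivative_commute_vec:
  fixes Y :: "R3 \<Rightarrow> R3"
  assumes S: "open S" "smooth_on S Y" "p \<in> S"
  shows "frechet_derivative (\<lambda>y. frechet_derivative Y (at y) v) (at p) w
       = frechet_derivative (\<lambda>y. frechet_derivative Y (at y) w) (at p) v"
proof -
  have comp: "frechet_derivative (\<lambda>y. frechet_derivative Y (at y) v) (at p) w $ i
      = frechet_derivative (\<lambda>y. frechet_derivative (\<lambda>z. Y z $ i) (at y) v) (at p) w" for i v w
  proof -
    have "frechet_derivative (\<lambda>y. frechet_derivative Y (at y) v) (at p) w $ i
        = frechet_derivative (\<lambda>y. frechet_derivative Y (at y) v $ i) (at p) w"
      using frechet_derivative_vec_nth[OF smooth_on_imp_differentiable[OF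
            smooth_on_frechet_derivative[OF S(2)] S(3)]] by simp
    also have "\<dots> = frechet_derivative (\<lambda>y. frechet_derivative (\<lambda>z. Y z $ i) (at y) v) (at p) w"
    proof -
      have "\<And>y. y \<in> S \<Longrightarrow> frechet_derivative Y (at y) v $ i = frechet_derivative (\<lambda>z. Y z $ i) (at y) v"
        using frechet_derivative_vec_nth[OF smooth_on_imp_differentiable[OF S(2)]] by simp
      from frechet_derivative_cong_open[OF S(1,3) this] show ?thesis by simp
    qed
    finally show ?thesis .
  qed
  have "smooth_on S (\<lambda>z. Y z $ i)" for i
    using smooth_on_bounded_linear[OF S(1) bounded_linear_vec_nth S(2)] .
  then show ?thesis
    unfolding vec_eq_iff comp by (intro allI) (rule frechet_derivative_commute[OF S(1) _ S(3)])
qed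

definition second_derivative :: "(R3 \<Rightarrow> R3) \<Rightarrow> R3 \<Rightarrow> R3 \<Rightarrow> R3 \<Rightarrow> R3" where
  "second_derivative Y p w u = frechet_derivative (\<lambda>y. frechet_derivative Y (at y) u) (at p) w"

lemma second_derivative_commute:
  "open S \<Longrightarrow> smooth_on S Y \<Longrightarrow> p \<in> S \<Longrightarrow> second_derivative Y p w u = second_derivative Y p u w"
  unfolding second_derivative_def by (rule frechet_derivative_commute_vec)

lemma linear_second_derivative:
  assumes "open S" "smooth_on S Y" "p \<in> S"
  shows "linear (second_derivative Y p w)"
proof -
  have "second_derivative Y p w = frechet_derivative (\<lambda>y. frechet_derivative Y (at y) w) (at p)"
    by (intro ext) (subst second_derivative_commute[OF assms], simp add: second_derivative_def)
  then show ?thesis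
    using linear_frechet_derivative[OF smooth_on_imp_differentiable[OF
          smooth_on_frechet_derivative[OF assms(2)] assms(3)]] by simp
qed

lemma frechet_derivative_along_field:
  fixes X Y :: "R3 \<Rightarrow> R3"
  assumes S: "open S" "smooth_on S X" "smooth_on S Y" "p \<in> S"
  shows "(\<lambda>y. frechet_derivative Y (at y) (X y)) differentiable (at p)"
    and "frechet_derivative (\<lambda>y. frechet_derivative Y (at y) (X y)) (at p) w
         = second_derivative Y p w (X p) + frechet_derivative Y (at p) (frechet_derivative X (at p) w)"
proof -
  define G where "G = (\<lambda>y. \<Sum>b\<in>Basis. (X y \<bullet> b) *\<^sub>R frechet_derivative Y (at y) b)"
  have eq: "frechet_derivative Y (at y) (X y) = G y" if "y \<in> S" for y
    unfolding G_def
    using linear_Basis_expansion[OF linear_frechet_derivative[OF smooth_on_imp_differentiable[OF S(3) that]]] .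
  have "smooth_on S G" unfolding G_def
    by (intro smooth_on_sum smooth_on_scaleR smooth_on_bounded_linear[OF _ bounded_linear_inner_left]
        smooth_on_frechet_derivative S finite_Basis)
  then show "(\<lambda>y. frechet_derivative Y (at y) (X y)) differentiable (at p)"
    using differentiable_cong_open[OF S(1,4), of "\<lambda>y. frechet_derivative Y (at y) (X y)" G] eq
      smooth_on_imp_differentiable[OF _ S(4)] by blast
  have dXb: "(\<lambda>y. X y \<bullet> b) differentiable (at p)" for b
    using smooth_on_imp_differentiable[OF smooth_on_bounded_linear[OF S(1) bounded_linear_inner_left S(2)] S(4)] .
  have dYb: "(\<lambda>y. frechet_derivative Y (at y) b) differentiable (at p)" for b
    using smooth_on_imp_differentiable[OF smooth_on_frechet_derivative[OF S(3)] S(4)] .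
  have "frechet_derivative (\<lambda>y. frechet_derivative Y (at y) (X y)) (at p) w = frechet_derivative G (at p) w"
    using frechet_derivative_cong_open[OF S(1,4), of "\<lambda>y. frechet_derivative Y (at y) (X y)" G] eq by simp
  also have "\<dots> = (\<Sum>b\<in>Basis. frechet_derivative (\<lambda>y. (X y \<bullet> b) *\<^sub>R frechet_derivative Y (at y) b) (at p) w)"
    unfolding G_def by (rule frechet_derivative_sum) (auto intro: differentiable_scaleR dXb dYb)
  also have "\<dots> = (\<Sum>b\<in>Basis. (frechet_derivative X (at p) w \<bullet> b) *\<^sub>R frechet_derivative Y (at p) b
                              + (X p \<bullet> b) *\<^sub>R second_derivative Y p w b)"
    unfolding frechet_derivative_scaleR[OF dXb dYb] second_derivative_def
    using frechet_derivative_bounded_linear[OF bounded_linear_inner_left smooth_on_imp_differentiable[OF S(2,4)]]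
    by simp
  also have "\<dots> = frechet_derivative Y (at p) (frechet_derivative X (at p) w) + second_derivative Y p w (X p)"
    unfolding sum.distrib
      linear_Basis_expansion[OF linear_frechet_derivative[OF smooth_on_imp_differentiable[OF S(3,4)]],
        of "frechet_derivative X (at p) w", symmetric]
    using linear_Basis_expansion[OF linear_second_derivative[OF S(1,3,4)], of w "X p"] by simp
  finally show "frechet_derivative (\<lambda>y. frechet_derivative Y (at y) (X y)) (at p) w
      = second_derivative Y p w (X p) + frechet_derivative Y (at p) (frechet_derivative X (at p) w)"
    by simp
qed

lemma frechet_derivative_lie:
  fixes X Y :: "R3 \<Rightarrow> R3"
  assumes S: "open S" "smooth_on S X" "smooth_on S Y" "p \<in> S"
  shows "frechet_derivative (lie X Y) (at p) w
     = second_derivative Y p w (X p) + frechet_derivative Y (at p) (frechet_derivative X (at p) w)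
     - second_derivative X p w (Y p) - frechet_derivative X (at p) (frechet_derivative Y (at p) w)"
proof -
  have "lie X Y = (\<lambda>y. frechet_derivative Y (at y) (X y) - frechet_derivative X (at y) (Y y))"
    unfolding lie_def by (rule ext) simp
  then show ?thesis
    using frechet_derivative_diff[OF frechet_derivative_along_field(1)[OF S]
        frechet_derivative_along_field(1)[OF S(1,3,2,4)]]
      frechet_derivative_along_field(2)[OF S] frechet_derivative_along_field(2)[OF S(1,3,2,4)]
    by (simp add: algebra_simps)
qed

lemma lie_jacobi:
  fixes X Y W :: "R3 \<Rightarrow> R3"
  assumes S: "open S" "smooth_on S X" "smooth_on S Y" "smooth_on S W" "p \<in> S"
  shows "lie (lie X Y) W p + lie (lie Y W) X p + lie (lie W X) Y p = 0"
proof -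
  note lX = linear_frechet_derivative[OF smooth_on_imp_differentiable[OF S(2,5)]]
    and lY = linear_frechet_derivative[OF smooth_on_imp_differentiable[OF S(3,5)]]
    and lW = linear_frechet_derivative[OF smooth_on_imp_differentiable[OF S(4,5)]]
  show ?thesis
    unfolding lie_def[of "lie X Y"] lie_def[of "lie Y W"] lie_def[of "lie W X"]
      frechet_derivative_lie[OF S(1,2,3,5)] frechet_derivative_lie[OF S(1,3,4,5)]
      frechet_derivative_lie[OF S(1,4,2,5)]
    unfolding lie_def linear_diff[OF lX] linear_diff[OF lY] linear_diff[OF lW]
      second_derivative_commute[OF S(1,3,5), of "W p" "X p"] second_derivative_commute[OF S(1,2,5), of "W p" "Y p"]
      second_derivative_commute[OF S(1,4,5), of "X p" "Y p"]
    by (simp add: algebra_simps)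
qed


section \<open>The Reeb field of the reference frame\<close>

locale contact_sub_lorentzian =
  fixes U :: "R3 set" and Y1 Y2 :: "R3 \<Rightarrow> R3"
  assumes contact: "contact_subLorentzian U Y1 Y2"
begin

lemma open_U: "open U" and smooth_Y1: "smooth_on U Y1" and smooth_Y2: "smooth_on U Y2"
  and lin_indep_bracket: "x \<in> U \<Longrightarrow> lin_indep3 (Y1 x) (Y2 x) (lie Y1 Y2 x)"
  using contact unfolding contact_subLorentzian_def by auto

lemma differentiable_Y1: "x \<in> U \<Longrightarrow> Y1 differentiable (at x)"
  and differentiable_Y2: "x \<in> U \<Longrightarrow> Y2 differentiable (at x)"
  using smooth_on_imp_differentiable smooth_Y1 smooth_Y2 by blast+

definition Z :: "R3 \<Rightarrow> R3" where "Z = lie Y2 Y1"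

lemma smooth_Z: "smooth_on U Z"
  unfolding Z_def by (rule smooth_on_lie[OF open_U smooth_Y2 smooth_Y1])

lemma lie_Y1_Y2: "lie Y1 Y2 x = - Z x"
  unfolding Z_def using lie_antisym by metis

lemma lin_indep_Z: "x \<in> U \<Longrightarrow> lin_indep3 (Y1 x) (Y2 x) (Z x)"
  using det3_nonzero_if_lin_indep3[OF lin_indep_bracket]
  by (intro lin_indep3_if_det3_nonzero) (simp add: lie_Y1_Y2 det3_right_simps)

definition vol :: "R3 \<Rightarrow> real" where "vol x = det3 (Y1 x) (Y2 x) (Z x)"

lemma vol_nonzero: "x \<in> U \<Longrightarrow> vol x \<noteq> 0"
  unfolding vol_def using det3_nonzero_if_lin_indep3 lin_indep_Z by blast

lemma smooth_vol: "smooth_on U vol"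
  unfolding vol_def by (intro smooth_on_det3 open_U smooth_Y1 smooth_Y2 smooth_Z)

text \<open>By Cramer's rule \<open>eta0 x\<close> is the third coordinate with respect to \<open>(Y1, Y2, Z)\<close>, i.e.\ the
  contact form \<open>eta\<close> of the reference frame.\<close>

definition eta0 :: "R3 \<Rightarrow> R3 \<Rightarrow> real" where "eta0 x z = det3 (Y1 x) (Y2 x) z / vol x"

lemma eta0_simps:
  "eta0 x (z + z') = eta0 x z + eta0 x z'"
  "eta0 x (z - z') = eta0 x z - eta0 x z'"
  "eta0 x (- z) = - eta0 x z"
  "eta0 x (c *\<^sub>R z) = c * eta0 x z"
  "eta0 x 0 = 0"
  "eta0 x (Y1 x) = 0"
  "eta0 x (Y2 x) = 0"
  unfolding eta0_def by (simp_all add: det3_right_simps add_divide_distrib diff_divide_distrib)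
    (simp add: det3_def)

lemma eta0_Z: "x \<in> U \<Longrightarrow> eta0 x (Z x) = 1"
  unfolding eta0_def vol_def[symmetric] using vol_nonzero by simp

lemma smooth_eta0: "smooth_on U W \<Longrightarrow> smooth_on U (\<lambda>x. eta0 x (W x))"
  unfolding eta0_def using vol_nonzero
  by (intro smooth_on_divide smooth_on_det3 open_U smooth_Y1 smooth_Y2 smooth_vol) auto

lemma lie_frame_combination_left:
  fixes a b :: "R3 \<Rightarrow> real"
  assumes "P differentiable (at x)" "a differentiable (at x)" "b differentiable (at x)"
    "T differentiable (at x)" "x \<in> U"
  shows "lie (\<lambda>y. (P y + a y *\<^sub>R Y1 y) + b y *\<^sub>R Y2 y) T x
     = lie P T x + (a x *\<^sub>R lie Y1 T x - frechet_derivative a (at x) (T x) *\<^sub>R Y1 x)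
                 + (b x *\<^sub>R lie Y2 T x - frechet_derivative b (at x) (T x) *\<^sub>R Y2 x)"
proof -
  note d1 = differentiable_Y1[OF assms(5)] and d2 = differentiable_Y2[OF assms(5)]
  have dA: "(\<lambda>y. P y + a y *\<^sub>R Y1 y) differentiable (at x)"
    by (intro differentiable_add differentiable_scaleR assms d1)
  show ?thesis unfolding
    lie_add_left[OF dA differentiable_scaleR[OF assms(3) d2] assms(4)]
    lie_add_left[OF assms(1) differentiable_scaleR[OF assms(2) d1] assms(4)]
    lie_scaleR_left[OF assms(2) d1 assms(4)] lie_scaleR_left[OF assms(3) d2 assms(4)] ..
qed

text \<open>The Reeb field \<open>reeb = - Z + \<alpha> Y1 + \<beta> Y2\<close>: the coefficient of \<open>Z\<close> gives \<open>eta0 reeb = -1\<close>, and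
  \<open>\<alpha>\<close>, \<open>\<beta>\<close> are chosen so that \<open>eta0 [reeb, Y\<^sub>i] = 0\<close>, which is \<open>reeb \<lrcorner> d\<eta> = 0\<close>.\<close>

definition \<alpha> :: "R3 \<Rightarrow> real" where "\<alpha> x = - eta0 x (lie Z Y2 x)"
definition \<beta> :: "R3 \<Rightarrow> real" where "\<beta> x = eta0 x (lie Z Y1 x)"
definition reeb :: "R3 \<Rightarrow> R3" where "reeb x = (- Z x + \<alpha> x *\<^sub>R Y1 x) + \<beta> x *\<^sub>R Y2 x"

lemma smooth_\<alpha>: "smooth_on U \<alpha>"
  unfolding \<alpha>_def by (intro smooth_on_minus open_U smooth_eta0 smooth_on_lie smooth_Z smooth_Y2)

lemma smooth_\<beta>: "smooth_on U \<beta>"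
  unfolding \<beta>_def by (intro smooth_eta0 smooth_on_lie open_U smooth_Z smooth_Y1)

lemma smooth_reeb: "smooth_on U reeb"
  unfolding reeb_def
  by (intro smooth_on_add smooth_on_minus smooth_on_scaleR open_U smooth_Z smooth_\<alpha> smooth_\<beta>
      smooth_Y1 smooth_Y2)

lemma differentiable_reeb: "x \<in> U \<Longrightarrow> reeb differentiable (at x)"
  using smooth_on_imp_differentiable[OF smooth_reeb] .

lemma eta0_reeb: "x \<in> U \<Longrightarrow> eta0 x (reeb x) = -1"
  unfolding reeb_def by (simp add: eta0_simps eta0_Z)

lemma lie_reeb_left:
  assumes "x \<in> U" "T differentiable (at x)"
  shows "lie reeb T x = - lie Z T x + (\<alpha> x *\<^sub>R lie Y1 T x - frechet_derivative \<alpha> (at x) (T x) *\<^sub>R Y1 x)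
                   + (\<beta> x *\<^sub>R lie Y2 T x - frechet_derivative \<beta> (at x) (T x) *\<^sub>R Y2 x)"
proof -
  note dZ = smooth_on_imp_differentiable[OF smooth_Z assms(1)]
  have "lie reeb T x = lie (\<lambda>y. (- Z y + \<alpha> y *\<^sub>R Y1 y) + \<beta> y *\<^sub>R Y2 y) T x"
    unfolding reeb_def ..
  then show ?thesis
    unfolding lie_frame_combination_left[OF differentiable_minus[OF dZ]
        smooth_on_imp_differentiable[OF smooth_\<alpha> assms(1)] smooth_on_imp_differentiable[OF smooth_\<beta> assms(1)]
        assms(2,1)]
      lie_minus_left[OF dZ assms(2)] .
qed

lemma eta0_lie_reeb_Y1: "x \<in> U \<Longrightarrow> eta0 x (lie reeb Y1 x) = 0"
  using lie_reeb_left[OF _ differentiable_Y1]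
  by (simp add: eta0_simps eta0_Z lie_self Z_def[symmetric] \<beta>_def)

lemma eta0_lie_reeb_Y2: "x \<in> U \<Longrightarrow> eta0 x (lie reeb Y2 x) = 0"
  using lie_reeb_left[OF _ differentiable_Y2]
  by (simp add: eta0_simps eta0_Z lie_self lie_Y1_Y2 \<alpha>_def)

lemma eta0_lie_Y_reeb: "x \<in> U \<Longrightarrow> eta0 x (lie Y1 reeb x) = 0" "x \<in> U \<Longrightarrow> eta0 x (lie Y2 reeb x) = 0"
  using eta0_lie_reeb_Y1 eta0_lie_reeb_Y2 lie_antisym[of reeb] eta0_simps(3) by simp_all

lemma det3_reeb: "det3 (Y1 x) (Y2 x) (reeb x) = - vol x"
  unfolding reeb_def vol_def by (simp add: det3_right_simps)

lemma lin_indep_reeb: "x \<in> U \<Longrightarrow> lin_indep3 (Y1 x) (Y2 x) (reeb x)"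
  using lin_indep3_if_det3_nonzero det3_reeb vol_nonzero by simp

text \<open>Writing \<open>X3 = reeb + a Y1 + b Y2\<close>, the two bracket conditions read \<open>b x = 0\<close> and \<open>a x = 0\<close>.\<close>

lemma reeb_unique:
  assumes V: "open V" "V \<subseteq> U" "x \<in> V" and dX: "X3 differentiable (at x)"
    and e: "\<forall>y\<in>V. eta0 y (X3 y) = -1" "eta0 x (lie X3 Y1 x) = 0" "eta0 x (lie X3 Y2 x) = 0"
  shows "X3 x = reeb x"
proof -
  have xU: "x \<in> U" using V by auto
  define W where "W y = X3 y - reeb y" for y
  define a where "a y = det3 (W y) (Y2 y) (Z y) / vol y" for y
  define b where "b y = det3 (Y1 y) (W y) (Z y) / vol y" for y
  have rep: "X3 y = (reeb y + a y *\<^sub>R Y1 y) + b y *\<^sub>R Y2 y" if "y \<in> V" for y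
  proof -
    have yU: "y \<in> U" using that V by auto
    have "W y = a y *\<^sub>R Y1 y + b y *\<^sub>R Y2 y + eta0 y (W y) *\<^sub>R Z y"
      using cramer3[OF det3_nonzero_if_lin_indep3[OF lin_indep_Z[OF yU]], of "W y"]
      unfolding a_def b_def eta0_def vol_def by simp
    moreover have "eta0 y (W y) = 0" unfolding W_def eta0_simps using e(1) that eta0_reeb[OF yU] by simp
    ultimately show ?thesis unfolding W_def by (simp add: algebra_simps)
  qed
  have dW: "W differentiable (at x)"
    unfolding W_def[abs_def] by (intro differentiable_diff dX differentiable_reeb xU)
  note dvol = smooth_on_imp_differentiable[OF smooth_vol xU]
    and dZ = smooth_on_imp_differentiable[OF smooth_Z xU]
  have da: "a differentiable (at x)" and db: "b differentiable (at x)"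
    unfolding a_def[abs_def] b_def[abs_def] using vol_nonzero[OF xU]
    by (intro differentiable_divide differentiable_det3 dW differentiable_Y1 differentiable_Y2 xU dZ dvol;
        assumption)+
  have L: "lie X3 T x = lie (\<lambda>y. (reeb y + a y *\<^sub>R Y1 y) + b y *\<^sub>R Y2 y) T x" for T
    by (rule lie_cong_open[OF V(1,3)]) (use rep in auto)
  have "eta0 x (lie X3 Y1 x) = b x"
    unfolding L lie_frame_combination_left[OF differentiable_reeb[OF xU] da db differentiable_Y1[OF xU] xU]
    by (simp add: eta0_simps eta0_lie_reeb_Y1[OF xU] lie_self Z_def[symmetric] eta0_Z[OF xU])
  moreover have "eta0 x (lie X3 Y2 x) = - a x"
    unfolding L lie_frame_combination_left[OF differentiable_reeb[OF xU] da db differentiable_Y2[OF xU] xU]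
    by (simp add: eta0_simps eta0_lie_reeb_Y2[OF xU] lie_self lie_Y1_Y2 eta0_Z[OF xU])
  ultimately show ?thesis using rep[OF V(3)] e(2,3) by simp
qed

text \<open>\<open>[Y\<^sub>i, reeb] = k\<^sub>i\<^sub>1 Y1 + k\<^sub>i\<^sub>2 Y2\<close>; there is no \<open>reeb\<close>-component because \<open>eta0 [reeb, Y\<^sub>i] = 0\<close>.\<close>

definition k11 :: "R3 \<Rightarrow> real" where
  "k11 y = det3 (lie Y1 reeb y) (Y2 y) (reeb y) / det3 (Y1 y) (Y2 y) (reeb y)"
definition k12 :: "R3 \<Rightarrow> real" where
  "k12 y = det3 (Y1 y) (lie Y1 reeb y) (reeb y) / det3 (Y1 y) (Y2 y) (reeb y)"
definition k21 :: "R3 \<Rightarrow> real" where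
  "k21 y = det3 (lie Y2 reeb y) (Y2 y) (reeb y) / det3 (Y1 y) (Y2 y) (reeb y)"
definition k22 :: "R3 \<Rightarrow> real" where
  "k22 y = det3 (Y1 y) (lie Y2 reeb y) (reeb y) / det3 (Y1 y) (Y2 y) (reeb y)"

lemma smooth_structure_functions:
  "smooth_on U k11" "smooth_on U k12" "smooth_on U k21" "smooth_on U k22"
  unfolding k11_def[abs_def] k12_def[abs_def] k21_def[abs_def] k22_def[abs_def] det3_reeb
  using vol_nonzero
  by (auto intro!: smooth_on_divide smooth_on_det3 smooth_on_minus open_U smooth_Y1 smooth_Y2 smooth_reeb
      smooth_on_lie smooth_vol)

lemma lie_Y_reeb:
  assumes "y \<in> U"
  shows "lie Y1 reeb y = k11 y *\<^sub>R Y1 y + k12 y *\<^sub>R Y2 y"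
    and "lie Y2 reeb y = k21 y *\<^sub>R Y1 y + k22 y *\<^sub>R Y2 y"
proof -
  note cramer = cramer3[OF det3_nonzero_if_lin_indep3[OF lin_indep_reeb[OF assms]]]
  have "det3 (Y1 y) (Y2 y) (lie Y1 reeb y) = 0" "det3 (Y1 y) (Y2 y) (lie Y2 reeb y) = 0"
    using eta0_lie_Y_reeb[OF assms] vol_nonzero[OF assms] unfolding eta0_def by simp_all
  then show "lie Y1 reeb y = k11 y *\<^sub>R Y1 y + k12 y *\<^sub>R Y2 y"
    and "lie Y2 reeb y = k21 y *\<^sub>R Y1 y + k22 y *\<^sub>R Y2 y"
    using cramer[of "lie Y1 reeb y"] cramer[of "lie Y2 reeb y"]
    unfolding k11_def k12_def k21_def k22_def by simp_all
qed

text \<open>The Jacobi identity for \<open>Y1, Y2, reeb\<close>, read off in the \<open>Z\<close>-component.\<close>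

lemma structure_trace_zero:
  assumes p: "p \<in> U"
  shows "k11 p + k22 p = 0"
proof -
  note d1 = differentiable_Y1[OF p] and d2 = differentiable_Y2[OF p] and dR = differentiable_reeb[OF p]
  note dk = smooth_on_imp_differentiable[OF smooth_structure_functions(1) p]
    smooth_on_imp_differentiable[OF smooth_structure_functions(2) p]
    smooth_on_imp_differentiable[OF smooth_structure_functions(3) p]
    smooth_on_imp_differentiable[OF smooth_structure_functions(4) p]
  have dc: "(\<lambda>y. c) differentiable (at p)" for c :: real by simp
  have "eta0 p (lie (lie Y1 Y2) reeb p) = 0"
  proof -
    have "lie (lie Y1 Y2) reeb p = lie (\<lambda>y. (reeb y + (- \<alpha> y) *\<^sub>R Y1 y) + (- \<beta> y) *\<^sub>R Y2 y) reeb p"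
      by (rule lie_cong_open[OF open_U p]) (auto simp: lie_Y1_Y2 reeb_def algebra_simps)
    then show ?thesis
      unfolding lie_frame_combination_left[OF dR differentiable_minus[OF smooth_on_imp_differentiable[OF smooth_\<alpha> p]]
          differentiable_minus[OF smooth_on_imp_differentiable[OF smooth_\<beta> p]] dR p]
      by (simp add: eta0_simps lie_self eta0_lie_Y_reeb[OF p])
  qed
  moreover have "eta0 p (lie (lie Y2 reeb) Y1 p) = k22 p"
  proof -
    have "lie (lie Y2 reeb) Y1 p = lie (\<lambda>y. k21 y *\<^sub>R Y1 y + k22 y *\<^sub>R Y2 y)
        (\<lambda>y. (\<lambda>y. 1) y *\<^sub>R Y1 y + (\<lambda>y. 0) y *\<^sub>R Y2 y) p"
      by (rule lie_cong_open[OF open_U p]) (auto simp: lie_Y_reeb)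
    then show ?thesis
      unfolding lie_linear_combination[OF dk(3,4) dc dc d1 d2]
      by (simp add: eta0_simps lie_Y1_Y2 eta0_Z[OF p])
  qed
  moreover have "eta0 p (lie (lie reeb Y1) Y2 p) = k11 p"
  proof -
    have "lie (lie reeb Y1) Y2 p = lie (\<lambda>y. (- k11 y) *\<^sub>R Y1 y + (- k12 y) *\<^sub>R Y2 y)
        (\<lambda>y. (\<lambda>y. 0) y *\<^sub>R Y1 y + (\<lambda>y. 1) y *\<^sub>R Y2 y) p"
      by (rule lie_cong_open[OF open_U p]) (auto simp: lie_antisym[of reeb] lie_Y_reeb)
    then show ?thesis
      unfolding lie_linear_combination[OF differentiable_minus[OF dk(1)] differentiable_minus[OF dk(2)] dc dc d1 d2]
      by (simp add: eta0_simps lie_Y1_Y2 eta0_Z[OF p])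
  qed
  moreover have "eta0 p (lie (lie Y1 Y2) reeb p + lie (lie Y2 reeb) Y1 p + lie (lie reeb Y1) Y2 p) = 0"
    using lie_jacobi[OF open_U smooth_Y1 smooth_Y2 smooth_reeb p] eta0_simps(5) by simp
  ultimately show ?thesis by (simp add: eta0_simps)
qed

end


section \<open>Oriented orthonormal frames\<close>

lemma oriented_orthonormal_coefficients:
  fixes a b c d :: real
  assumes "- a * a + b * b = -1" "- a * c + b * d = 0" "- c * c + d * d = 1" "- a < 0" "d > 0"
  shows "c = b \<and> d = a"
proof -
  have a2: "a * a = 1 + b * b" and d2: "d * d = 1 + c * c" using assms by auto
  have "a * c = b * d" using assms(2) by simp
  then have "c * c = b * b" using a2 d2 by algebra
  then have "d * d = a * a" using a2 d2 by simp
  then have da: "d = a" using power2_eq_imp_eq[of d a] assms(4,5) by (simp add: power2_eq_square)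
  then have "a * c = a * b" using \<open>a * c = b * d\<close> by simp
  then show ?thesis using da assms(4) by simp
qed

text \<open>Every oriented orthonormal frame is a pointwise hyperbolic rotation of \<open>(Y1, Y2)\<close>:
  \<open>X1 = ch Y1 + sh Y2\<close>, \<open>X2 = sh Y1 + ch Y2\<close> with \<open>ch\<^sup>2 - sh\<^sup>2 = 1\<close>, \<open>ch > 0\<close>
  (i.e.\ \<open>ch = cosh t\<close>, \<open>sh = sinh t\<close>). The coefficients are computed by Cramer's rule so that
  they are visibly differentiable.\<close>

locale oriented_orthonormal_frame = contact_sub_lorentzian +
  fixes V :: "R3 set" and X1 X2 :: "R3 \<Rightarrow> R3"
  assumes frame: "oon_frame U Y1 Y2 V X1 X2"
begin

lemma open_V: "open V" and V_subset: "V \<subseteq> U" and smooth_X1: "smooth_on V X1"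
  and smooth_X2: "smooth_on V X2"
  using frame unfolding oon_frame_def by auto

definition ch :: "R3 \<Rightarrow> real" where "ch y = det3 (X1 y) (Y2 y) (Z y) / vol y"
definition sh :: "R3 \<Rightarrow> real" where "sh y = det3 (Y1 y) (X1 y) (Z y) / vol y"

lemma frame_boost:
  assumes "y \<in> V"
  shows "X1 y = ch y *\<^sub>R Y1 y + sh y *\<^sub>R Y2 y" "X2 y = sh y *\<^sub>R Y1 y + ch y *\<^sub>R Y2 y"
    "ch y > 0" "ch y * ch y - sh y * sh y = 1"
proof -
  have yU: "y \<in> U" using assms V_subset by auto
  obtain a b c d where h: "X1 y = a *\<^sub>R Y1 y + b *\<^sub>R Y2 y" "X2 y = c *\<^sub>R Y1 y + d *\<^sub>R Y2 y"
      "- a * a + b * b = -1" "- a * c + b * d = 0" "- c * c + d * d = 1" "- a < 0" "d > 0"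
    using frame assms unfolding oon_frame_def by blast
  have "coords (Y1 y) (Y2 y) (Z y) (X1 y) = (a, b, 0)"
    using coords_eqI[OF lin_indep_Z[OF yU], of "X1 y" a b 0] h(1) by simp
  then have "ch y = a" "sh y = b"
    using coords_eq_cramer3[OF lin_indep_Z[OF yU], of "X1 y"] unfolding ch_def sh_def vol_def by auto
  then show "X1 y = ch y *\<^sub>R Y1 y + sh y *\<^sub>R Y2 y" "X2 y = sh y *\<^sub>R Y1 y + ch y *\<^sub>R Y2 y"
    "ch y > 0" "ch y * ch y - sh y * sh y = 1"
    using h oriented_orthonormal_coefficients[OF h(3-7)] by auto
qed

lemma differentiable_ch: "y \<in> V \<Longrightarrow> ch differentiable (at y)"
  and differentiable_sh: "y \<in> V \<Longrightarrow> sh differentiable (at y)"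
proof -
  assume y: "y \<in> V"
  then have yU: "y \<in> U" using V_subset by auto
  note d = smooth_on_imp_differentiable[OF smooth_X1 y] differentiable_Y1[OF yU] differentiable_Y2[OF yU]
    smooth_on_imp_differentiable[OF smooth_Z yU] smooth_on_imp_differentiable[OF smooth_vol yU]
  show "ch differentiable (at y)" "sh differentiable (at y)"
    unfolding ch_def[abs_def] sh_def[abs_def] using vol_nonzero[OF yU]
    by (intro differentiable_divide differentiable_det3 d; assumption)+
qed

lemma ch_sh_derivative: "y \<in> V \<Longrightarrow> ch y * frechet_derivative ch (at y) u = sh y * frechet_derivative sh (at y) u"
proof -
  assume y: "y \<in> V"
  note dch = differentiable_ch[OF y] and dsh = differentiable_sh[OF y]
  have "frechet_derivative (\<lambda>y. ch y * ch y - sh y * sh y) (at y) u = 0"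
    by (rule frechet_derivative_locally_const[OF open_V y]) (use frame_boost(4) in auto)
  moreover have "frechet_derivative (\<lambda>y. ch y * ch y - sh y * sh y) (at y) u
    = 2 * (ch y * frechet_derivative ch (at y) u) - 2 * (sh y * frechet_derivative sh (at y) u)"
    unfolding frechet_derivative_diff[OF differentiable_mult[OF dch dch] differentiable_mult[OF dsh dsh]]
      frechet_derivative_mult[OF dch dch] frechet_derivative_mult[OF dsh dsh] by simp
  ultimately show ?thesis by simp
qed

lemma lie_X2_X1:
  assumes y: "y \<in> V"
  shows "\<exists>r s. lie X2 X1 y = Z y + r *\<^sub>R Y1 y + s *\<^sub>R Y2 y"
proof -
  have yU: "y \<in> U" using y V_subset by auto
  have "lie X2 X1 y = lie (\<lambda>y. sh y *\<^sub>R Y1 y + ch y *\<^sub>R Y2 y) (\<lambda>y. ch y *\<^sub>R Y1 y + sh y *\<^sub>R Y2 y) y"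
    by (rule lie_cong_open[OF open_V y]) (use frame_boost in auto)
  moreover have "\<exists>r s. lie (\<lambda>y. sh y *\<^sub>R Y1 y + ch y *\<^sub>R Y2 y) (\<lambda>y. ch y *\<^sub>R Y1 y + sh y *\<^sub>R Y2 y) y
     = (sh y * sh y - ch y * ch y) *\<^sub>R lie Y1 Y2 y + r *\<^sub>R Y1 y + s *\<^sub>R Y2 y"
    using lie_linear_combination[OF differentiable_sh[OF y] differentiable_ch[OF y] differentiable_ch[OF y]
        differentiable_sh[OF y] differentiable_Y1[OF yU] differentiable_Y2[OF yU]] by blast
  moreover have "(sh y * sh y - ch y * ch y) *\<^sub>R lie Y1 Y2 y = Z y"
    using frame_boost(4)[OF y] lie_Y1_Y2 by (simp add: algebra_simps)
  ultimately show ?thesis by metis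
qed

lemma eta_eq_eta0: "y \<in> V \<Longrightarrow> eta X1 X2 y z = eta0 y z"
proof -
  assume y: "y \<in> V"
  have yU: "y \<in> U" using y V_subset by auto
  obtain r s where rs: "lie X2 X1 y = Z y + r *\<^sub>R Y1 y + s *\<^sub>R Y2 y" using lie_X2_X1[OF y] by blast
  have "eta X1 X2 y z = snd (snd (coords (Y1 y) (Y2 y) (Z y) z))"
    unfolding eta_def rs frame_boost(1,2)[OF y]
    using coords_boost_shear(2)[OF lin_indep_Z[OF yU] frame_boost(4)[OF y]] by simp
  also have "\<dots> = eta0 y z" using coords_eq_cramer3[OF lin_indep_Z[OF yU]] unfolding eta0_def vol_def by simp
  finally show ?thesis .
qed

lemma eta0_X: "y \<in> V \<Longrightarrow> eta0 y (X1 y) = 0" "y \<in> V \<Longrightarrow> eta0 y (X2 y) = 0"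
  using frame_boost by (simp_all add: eta0_simps)

lemma lie_X_right:
  assumes x: "x \<in> V" and dT: "T differentiable (at x)"
  shows "lie T X1 x = (ch x *\<^sub>R lie T Y1 x + frechet_derivative ch (at x) (T x) *\<^sub>R Y1 x)
                    + (sh x *\<^sub>R lie T Y2 x + frechet_derivative sh (at x) (T x) *\<^sub>R Y2 x)"
    and "lie T X2 x = (sh x *\<^sub>R lie T Y1 x + frechet_derivative sh (at x) (T x) *\<^sub>R Y1 x)
                    + (ch x *\<^sub>R lie T Y2 x + frechet_derivative ch (at x) (T x) *\<^sub>R Y2 x)"
proof -
  have xU: "x \<in> U" using x V_subset by auto
  note d1 = differentiable_Y1[OF xU] and d2 = differentiable_Y2[OF xU]
    and dch = differentiable_ch[OF x] and dsh = differentiable_sh[OF x]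
  have "lie T X1 x = lie T (\<lambda>y. ch y *\<^sub>R Y1 y + sh y *\<^sub>R Y2 y) x"
    "lie T X2 x = lie T (\<lambda>y. sh y *\<^sub>R Y1 y + ch y *\<^sub>R Y2 y) x"
    by (rule lie_cong_open[OF open_V x]; use frame_boost in simp)+
  then show "lie T X1 x = (ch x *\<^sub>R lie T Y1 x + frechet_derivative ch (at x) (T x) *\<^sub>R Y1 x)
                    + (sh x *\<^sub>R lie T Y2 x + frechet_derivative sh (at x) (T x) *\<^sub>R Y2 x)"
    and "lie T X2 x = (sh x *\<^sub>R lie T Y1 x + frechet_derivative sh (at x) (T x) *\<^sub>R Y1 x)
                    + (ch x *\<^sub>R lie T Y2 x + frechet_derivative ch (at x) (T x) *\<^sub>R Y2 x)"
    unfolding lie_add_right[OF dT differentiable_scaleR[OF dch d1] differentiable_scaleR[OF dsh d2]]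
      lie_add_right[OF dT differentiable_scaleR[OF dsh d1] differentiable_scaleR[OF dch d2]]
      lie_scaleR_right[OF dch dT d1] lie_scaleR_right[OF dsh dT d2]
      lie_scaleR_right[OF dsh dT d1] lie_scaleR_right[OF dch dT d2] by simp_all
qed

lemma deta_X:
  assumes x: "x \<in> V" and dT: "T differentiable (at x)" and e: "\<forall>y\<in>V. eta0 y (T y) = -1"
  shows "deta X1 X2 T X1 x = - (ch x * eta0 x (lie T Y1 x) + sh x * eta0 x (lie T Y2 x))"
    and "deta X1 X2 T X2 x = - (sh x * eta0 x (lie T Y1 x) + ch x * eta0 x (lie T Y2 x))"
proof -
  have "frechet_derivative (\<lambda>y. eta X1 X2 y (X1 y)) (at x) u = 0"
    "frechet_derivative (\<lambda>y. eta X1 X2 y (X2 y)) (at x) u = 0"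
    "frechet_derivative (\<lambda>y. eta X1 X2 y (T y)) (at x) u = 0" for u
    by (rule frechet_derivative_locally_const[OF open_V x]; simp add: eta_eq_eta0 eta0_X e)+
  then show "deta X1 X2 T X1 x = - (ch x * eta0 x (lie T Y1 x) + sh x * eta0 x (lie T Y2 x))"
    and "deta X1 X2 T X2 x = - (sh x * eta0 x (lie T Y1 x) + ch x * eta0 x (lie T Y2 x))"
    unfolding deta_def eta_eq_eta0[OF x] lie_X_right[OF x dT] by (simp_all add: eta0_simps)
qed

lemma X3of_eq_reeb: "X3of V X1 X2 = (\<lambda>y. if y \<in> V then reeb y else 0)"
  unfolding X3of_def
proof (rule the_equality)
  define RV where "RV y = (if y \<in> V then reeb y else 0)" for y
  have smooth_RV: "smooth_on V RV"
    using smooth_on_cong[OF open_V, of reeb RV] smooth_on_subset[OF smooth_reeb V_subset]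
    unfolding RV_def by simp
  show "smooth_on V RV \<and> (\<forall>x. x \<notin> V \<longrightarrow> RV x = 0) \<and>
    (\<forall>x\<in>V. eta X1 X2 x (RV x) = - 1 \<and> deta X1 X2 RV X1 x = 0 \<and> deta X1 X2 RV X2 x = 0)"
  proof (intro conjI allI ballI impI smooth_RV)
    fix x assume "x \<notin> V" then show "RV x = 0" unfolding RV_def by simp
  next
    fix x assume x: "x \<in> V"
    have xU: "x \<in> U" using x V_subset by auto
    have e: "\<forall>y\<in>V. eta0 y (RV y) = -1" using eta0_reeb V_subset unfolding RV_def by auto
    have "lie RV T x = lie reeb T x" for T by (rule lie_cong_open[OF open_V x]) (auto simp: RV_def)
    then show "eta X1 X2 x (RV x) = - 1" "deta X1 X2 RV X1 x = 0" "deta X1 X2 RV X2 x = 0"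
      using deta_X[OF x smooth_on_imp_differentiable[OF smooth_RV x] e] eta_eq_eta0[OF x] e x
        eta0_lie_reeb_Y1[OF xU] eta0_lie_reeb_Y2[OF xU] by simp_all
  qed
next
  fix X3 assume P: "smooth_on V X3 \<and> (\<forall>x. x \<notin> V \<longrightarrow> X3 x = 0) \<and>
    (\<forall>x\<in>V. eta X1 X2 x (X3 x) = - 1 \<and> deta X1 X2 X3 X1 x = 0 \<and> deta X1 X2 X3 X2 x = 0)"
  show "X3 = (\<lambda>y. if y \<in> V then reeb y else 0)"
  proof
    fix x show "X3 x = (if x \<in> V then reeb x else 0)"
    proof (cases "x \<in> V")
      case x: True
      have e: "\<forall>y\<in>V. eta0 y (X3 y) = -1" using P eta_eq_eta0 by auto
      have dX: "X3 differentiable (at x)" using smooth_on_imp_differentiable[OF conjunct1[OF P] x] .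
      define u where "u = eta0 x (lie X3 Y1 x)"
      define v where "v = eta0 x (lie X3 Y2 x)"
      have "ch x * u + sh x * v = 0" "sh x * u + ch x * v = 0"
        using P deta_X[OF x dX e] x unfolding u_def v_def by auto
      then have "u = 0" "v = 0" using frame_boost(4)[OF x] by algebra+
      then show ?thesis using reeb_unique[OF open_V V_subset x dX e] x unfolding u_def v_def by simp
    qed (use P in simp)
  qed
qed


lemma coords_X_reeb:
  assumes p: "p \<in> V"
  shows "coords (X1 p) (X2 p) (reeb p) (P *\<^sub>R Y1 p + Q *\<^sub>R Y2 p)
       = (ch p * P - sh p * Q, ch p * Q - sh p * P, 0)"
proof -
  have pU: "p \<in> U" using p V_subset by auto
  note X = frame_boost[OF p]
  have "lin_indep3 (X1 p) (X2 p) (reeb p)"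
    using coords_boost_shear(1)[OF lin_indep_reeb[OF pU] X(4), of 0 0] X(1,2) by simp
  moreover have "(ch p * P - sh p * Q) *\<^sub>R X1 p + (ch p * Q - sh p * P) *\<^sub>R X2 p + 0 *\<^sub>R reeb p
      = ((ch p * ch p - sh p * sh p) * P) *\<^sub>R Y1 p + ((ch p * ch p - sh p * sh p) * Q) *\<^sub>R Y2 p"
    unfolding X(1,2) by (simp add: algebra_simps)
  ultimately show ?thesis using X(4) by (intro coords_eqI) simp_all
qed

lemma lie_X_reeb:
  assumes p: "p \<in> V"
  defines "da \<equiv> frechet_derivative ch (at p) (reeb p)" and "db \<equiv> frechet_derivative sh (at p) (reeb p)"
  shows "lie X1 reeb p = (ch p * k11 p + sh p * k21 p - da) *\<^sub>R Y1 p + (ch p * k12 p + sh p * k22 p - db) *\<^sub>R Y2 p"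
    and "lie X2 reeb p = (sh p * k11 p + ch p * k21 p - db) *\<^sub>R Y1 p + (sh p * k12 p + ch p * k22 p - da) *\<^sub>R Y2 p"
proof -
  have pU: "p \<in> U" using p V_subset by auto
  show "lie X1 reeb p = (ch p * k11 p + sh p * k21 p - da) *\<^sub>R Y1 p + (ch p * k12 p + sh p * k22 p - db) *\<^sub>R Y2 p"
    and "lie X2 reeb p = (sh p * k11 p + ch p * k21 p - db) *\<^sub>R Y1 p + (sh p * k12 p + ch p * k22 p - da) *\<^sub>R Y2 p"
    using lie_antisym[of X1 reeb p] lie_antisym[of X2 reeb p]
    unfolding lie_X_right[OF p differentiable_reeb[OF pU]] lie_antisym[of reeb Y1] lie_antisym[of reeb Y2]
      lie_Y_reeb[OF pU] da_def db_def
    by (simp_all add: algebra_simps)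
qed

text \<open>With \<open>ch = cosh t\<close>, \<open>sh = sinh t\<close> we have \<open>A = cosh 2t\<close>, \<open>B = sinh 2t\<close>: \<open>h\<close> is conjugated by
  the boost.\<close>

lemma hmat_boost:
  assumes p: "p \<in> V"
  defines "A \<equiv> ch p * ch p + sh p * sh p" and "B \<equiv> 2 * ch p * sh p" and "m \<equiv> (k12 p - k21 p) / 2"
  shows "hmat V X1 X2 p = mat2 (A * k11 p - B * m) (A * m - B * k11 p) (- (A * m - B * k11 p)) (- (A * k11 p - B * m))"
proof -
  have pU: "p \<in> U" using p V_subset by auto
  define a where "a = ch p"
  define b where "b = sh p"
  define da where "da = frechet_derivative ch (at p) (reeb p)"
  define db where "db = frechet_derivative sh (at p) (reeb p)"
  define P1 where "P1 = a * k11 p + b * k21 p - da"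
  define Q1 where "Q1 = a * k12 p + b * k22 p - db"
  define P2 where "P2 = b * k11 p + a * k21 p - db"
  define Q2 where "Q2 = b * k12 p + a * k22 p - da"
  note L = lie_X_reeb[OF p, folded a_def b_def da_def db_def]
    and C = coords_X_reeb[OF p, folded a_def b_def]
  have h: "hmat V X1 X2 p = mat2 (a * P1 - b * Q1) (((a * Q1 - b * P1) - (a * P2 - b * Q2)) / 2)
      (((a * P2 - b * Q2) - (a * Q1 - b * P1)) / 2) (- (a * P1 - b * Q1))"
  proof -
    have "lie T (\<lambda>y. if y \<in> V then reeb y else 0) p = lie T reeb p" for T
      by (rule lie_cong_open[OF open_V p]) auto
    then show ?thesis unfolding hmat_def Let_def X3of_eq_reeb P1_def Q1_def P2_def Q2_def using p L C by simp
  qed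
  have e1: "a * P1 - b * Q1 = A * k11 p - B * m"
  proof -
    have "a * da = b * db" unfolding a_def b_def da_def db_def using ch_sh_derivative[OF p] .
    moreover have "k22 p = - k11 p" using structure_trace_zero[OF pU] by simp
    ultimately show ?thesis unfolding A_def B_def m_def P1_def Q1_def a_def[symmetric] b_def[symmetric]
      by (simp add: algebra_simps) (simp add: field_simps)
  qed
  have e2: "((a * Q1 - b * P1) - (a * P2 - b * Q2)) / 2 = A * m - B * k11 p"
  proof -
    have "k22 p = - k11 p" using structure_trace_zero[OF pU] by simp
    then show ?thesis unfolding A_def B_def m_def P1_def Q1_def P2_def Q2_def a_def[symmetric] b_def[symmetric]
      by (simp add: field_simps)
  qed
  then have e3: "((a * P2 - b * Q2) - (a * Q1 - b * P1)) / 2 = - (A * m - B * k11 p)" by simp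
  show ?thesis unfolding h e1 e2 e3 ..
qed

end


section \<open>Normal forms of \<open>h\<close>\<close>

lemma mat2_eq_iff: "mat2 a b c d = mat2 a' b' c' d' \<longleftrightarrow> a = a' \<and> b = b' \<and> c = c' \<and> d = d'"
  unfolding mat2_def by (auto simp: vec_eq_iff forall_2)

lemma mat2_zero: "mat2 0 0 0 0 = 0"
  unfolding mat2_def by (simp add: vec_eq_iff forall_2)

lemma det_mat2: "det (mat2 a b c d) = a * d - b * c"
  unfolding det_2 mat2_def by simp

text \<open>\<open>h = mat2 c b (-b) (-c)\<close> in the light-cone coordinates \<open>u = c + b\<close>, \<open>w = c - b\<close>, where
  \<open>det h = - u w\<close>; a boost with parameter \<open>t\<close> multiplies \<open>u\<close> by \<open>e\<^sup>-\<^sup>2\<^sup>t\<close> and \<open>w\<close> by \<open>e\<^sup>2\<^sup>t\<close>.\<close>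

definition normal_pair :: "real \<Rightarrow> real \<Rightarrow> bool" where
  "normal_pair u w \<longleftrightarrow>
     (u * w = 0 \<longrightarrow> (u = 0 \<and> w = 0) \<or> (w = 0 \<and> (u = 2 \<or> u = -2)) \<or> (u = 0 \<and> (w = 2 \<or> w = -2))) \<and>
     (u * w < 0 \<longrightarrow> u = - w \<and> u \<noteq> 0) \<and> (u * w > 0 \<longrightarrow> u = w \<and> u \<noteq> 0)"

lemma normal_form_mat2_iff: "normal_form (mat2 c b (- b) (- c)) \<longleftrightarrow> normal_pair (c + b) (c - b)"
proof -
  have det: "det (mat2 c b (- b) (- c)) = - ((c + b) * (c - b))"
    unfolding det_mat2 by (simp add: algebra_simps)
  have zero: "mat2 c b (- b) (- c) \<in> {mat2 0 0 0 0, mat2 1 1 (-1) (-1), mat2 1 (-1) 1 (-1),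
        mat2 (-1) 1 (-1) 1, mat2 (-1) (-1) 1 1}
    \<longleftrightarrow> (c = 0 \<and> b = 0) \<or> (c = 1 \<and> b = 1) \<or> (c = 1 \<and> b = -1) \<or> (c = -1 \<and> b = 1) \<or> (c = -1 \<and> b = -1)"
    by (auto simp: mat2_eq_iff)
  have pos: "(\<exists>k. k \<noteq> 0 \<and> mat2 c b (- b) (- c) = mat2 0 k (- k) 0) \<longleftrightarrow> c = 0 \<and> b \<noteq> 0"
    and neg: "(\<exists>k. k \<noteq> 0 \<and> mat2 c b (- b) (- c) = mat2 k 0 0 (- k)) \<longleftrightarrow> b = 0 \<and> c \<noteq> 0"
    by (auto simp: mat2_eq_iff)
  show ?thesis unfolding normal_form_def det zero pos neg normal_pair_def
    by (smt (verit) mult_eq_0_iff mult_neg_neg mult_pos_pos zero_less_mult_iff)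
qed

lemma normal_pair_rescale_exists: "\<exists>t>0. normal_pair (u / t) (t * w)"
proof (cases "u * w = 0")
  case True
  consider "u = 0" "w = 0" | "u = 0" "w \<noteq> 0" | "u \<noteq> 0" "w = 0" using True by auto
  then show ?thesis
  proof cases
    case 1
    then show ?thesis by (intro exI[of _ 1]) (simp add: normal_pair_def)
  next
    case 2
    then have "(2 / \<bar>w\<bar>) * w = 2 \<or> (2 / \<bar>w\<bar>) * w = -2" by (cases "w > 0") (auto simp: field_simps)
    then show ?thesis using 2 by (intro exI[of _ "2 / \<bar>w\<bar>"]) (auto simp: normal_pair_def)
  next
    case 3
    then have "u / (\<bar>u\<bar> / 2) = 2 \<or> u / (\<bar>u\<bar> / 2) = -2" by (cases "u > 0") (auto simp: field_simps)
    then show ?thesis using 3 by (intro exI[of _ "\<bar>u\<bar> / 2"]) (auto simp: normal_pair_def)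
  qed
next
  case False
  define t where "t = sqrt \<bar>u / w\<bar>"
  have t: "t > 0" "t * t = \<bar>u / w\<bar>" unfolding t_def using False by auto
  have "u / t = (if u * w < 0 then - (t * w) else t * w)" "u / t \<noteq> 0"
    using t False by (auto simp: field_simps abs_if mult_less_0_iff divide_less_0_iff)
  moreover have "(u / t) * (t * w) = u * w" using t by (simp add: field_simps)
  ultimately show ?thesis using False t by (intro exI[of _ t]) (auto simp: normal_pair_def)
qed

lemma normal_pair_rescale_sq:
  assumes nz: "\<not> (u = 0 \<and> w = 0)" and t: "t > 0" and n: "normal_pair (u / t) (t * w)"
  shows "t * t = (if u * w \<noteq> 0 then \<bar>u / w\<bar> else if u = 0 then 4 / (w * w) else u * u / 4)"
proof -
  have prod: "(u / t) * (t * w) = u * w" using t by (simp add: field_simps)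
  consider "u * w < 0" | "u * w > 0" | "u = 0" "w \<noteq> 0" | "u \<noteq> 0" "w = 0"
    using nz by (metis linorder_neqE_linordered_idom mult_eq_0_iff)
  then show ?thesis
  proof cases
    case 1
    then have "u = - (t * t) * w" using n t prod unfolding normal_pair_def by (auto simp: field_simps)
    then show ?thesis using 1 t by (auto simp: field_simps abs_if)
  next
    case 2
    then have "u = (t * t) * w" using n t prod unfolding normal_pair_def by (auto simp: field_simps)
    then show ?thesis using 2 t by (auto simp: field_simps abs_if)
  next
    case 3
    then have "(t * w) * (t * w) = 4" using n t prod unfolding normal_pair_def by auto
    then show ?thesis using 3 by (simp add: field_simps)
  next
    case 4
    then have "u / t = 2 \<or> u / t = -2" using n t prod unfolding normal_pair_def by auto
    then have "u = 2 * t \<or> u = -2 * t" using t by (auto simp: field_simps)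
    then show ?thesis using 4 by auto
  qed
qed

lemma normal_pair_rescale_unique:
  assumes "\<not> (u = 0 \<and> w = 0)" "t1 > 0" "t2 > 0"
    and "normal_pair (u / t1) (t1 * w)" "normal_pair (u / t2) (t2 * w)"
  shows "t1 = t2"
  using normal_pair_rescale_sq[OF assms(1,2,4)] normal_pair_rescale_sq[OF assms(1,3,5)] assms(2,3)
  by (metis less_eq_real_def power2_eq_imp_eq power2_eq_square)

context oriented_orthonormal_frame
begin

lemma boost_lightcone_factor:
  assumes "p \<in> V"
  shows "ch p + sh p > 0" "(ch p - sh p) * (ch p + sh p) = 1"
proof -
  have "sh p * sh p < ch p * ch p" using frame_boost(4)[OF assms] by simp
  then have "\<bar>sh p\<bar> < ch p"
    using power2_less_imp_less[of "\<bar>sh p\<bar>" "ch p"] frame_boost(3)[OF assms] by (simp add: power2_eq_square)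
  then show "ch p + sh p > 0" by linarith
  show "(ch p - sh p) * (ch p + sh p) = 1" using frame_boost(4)[OF assms] by (simp add: algebra_simps)
qed

lemma normal_form_hmat_iff:
  assumes p: "p \<in> V"
  defines "s \<equiv> ch p + sh p" and "m \<equiv> (k12 p - k21 p) / 2"
  shows "normal_form (hmat V X1 X2 p) \<longleftrightarrow> normal_pair ((k11 p + m) / (s * s)) ((s * s) * (k11 p - m))"
proof -
  define A where "A = ch p * ch p + sh p * sh p"
  define B where "B = 2 * ch p * sh p"
  have "ch p - sh p = 1 / s" using boost_lightcone_factor[OF p] unfolding s_def by (simp add: field_simps)
  then have "A - B = 1 / (s * s)" unfolding A_def B_def by (simp add: algebra_simps)
  have "(A * k11 p - B * m) + (A * m - B * k11 p) = (A - B) * (k11 p + m)" by (simp add: algebra_simps)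
  also have "\<dots> = (k11 p + m) / (s * s)" using \<open>A - B = 1 / (s * s)\<close> by simp
  finally have "(A * k11 p - B * m) + (A * m - B * k11 p) = (k11 p + m) / (s * s)" .
  moreover have "(A * k11 p - B * m) - (A * m - B * k11 p) = (s * s) * (k11 p - m)"
    unfolding A_def B_def s_def by (simp add: algebra_simps)
  ultimately show ?thesis unfolding hmat_boost[OF p] normal_form_mat2_iff A_def B_def m_def by simp
qed

end


section \<open>Existence and uniqueness of the normal frame\<close>

context contact_sub_lorentzian
begin

lemma oriented_orthonormal_frameI:
  "oon_frame U Y1 Y2 V X1 X2 \<Longrightarrow> oriented_orthonormal_frame U Y1 Y2 V X1 X2"
  unfolding oriented_orthonormal_frame_def oriented_orthonormal_frame_axioms_def
    contact_sub_lorentzian_def using contact by simp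

text \<open>A constant boost of \<open>(Y1, Y2)\<close> with \<open>(ch + sh)\<^sup>2 = t\<close> realises the rescaling by \<open>t\<close>.\<close>

lemma normal_frame_exists:
  assumes p: "p \<in> U"
  shows "\<exists>V X1 X2. p \<in> V \<and> oon_frame U Y1 Y2 V X1 X2 \<and> normal_form (hmat V X1 X2 p)"
proof -
  define m where "m = (k12 p - k21 p) / 2"
  obtain t where t: "t > 0" "normal_pair ((k11 p + m) / t) (t * (k11 p - m))"
    using normal_pair_rescale_exists by blast
  define s where "s = sqrt t"
  define a where "a = (s + 1 / s) / 2"
  define b where "b = (s - 1 / s) / 2"
  have s: "s > 0" "s * s = t" unfolding s_def using t by auto
  have ab: "a > 0" "a * a - b * b = 1" "a + b = s" unfolding a_def b_def using s
    by (auto simp: field_simps add_pos_pos)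
  define X1 where "X1 = (\<lambda>y. a *\<^sub>R Y1 y + b *\<^sub>R Y2 y)"
  define X2 where "X2 = (\<lambda>y. b *\<^sub>R Y1 y + a *\<^sub>R Y2 y)"
  have frame: "oon_frame U Y1 Y2 U X1 X2"
    unfolding oon_frame_def
  proof (intro conjI open_U subset_refl ballI)
    show "smooth_on U X1" "smooth_on U X2" unfolding X1_def X2_def
      by (intro smooth_on_add smooth_on_scaleR smooth_on_const open_U smooth_Y1 smooth_Y2)+
    fix x assume "x \<in> U"
    show "\<exists>a' b' c d. X1 x = a' *\<^sub>R Y1 x + b' *\<^sub>R Y2 x \<and> X2 x = c *\<^sub>R Y1 x + d *\<^sub>R Y2 x \<and>
        - a' * a' + b' * b' = -1 \<and> - a' * c + b' * d = 0 \<and> - c * c + d * d = 1 \<and> - a' < 0 \<and> d > 0"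
      using ab by (intro exI[of _ a] exI[of _ b]) (auto simp: X1_def X2_def algebra_simps)
  qed
  interpret F: oriented_orthonormal_frame U Y1 Y2 U X1 X2 by (rule oriented_orthonormal_frameI[OF frame])
  have "(F.ch p - a) *\<^sub>R Y1 p + (F.sh p - b) *\<^sub>R Y2 p + 0 *\<^sub>R Z p = 0"
    using F.frame_boost(1)[OF p] unfolding X1_def by (simp add: algebra_simps)
  then have "F.ch p = a" "F.sh p = b"
    using lin_indep_Z[OF p, unfolded lin_indep3_def, rule_format, of "F.ch p - a" "F.sh p - b" 0] by auto
  then have "normal_form (hmat U X1 X2 p)"
    using F.normal_form_hmat_iff[OF p] t ab(3) s(2) unfolding m_def by simp
  then show ?thesis using p frame by blast
qed

lemma normal_frame_unique:
  assumes f: "p \<in> V" "oon_frame U Y1 Y2 V X1 X2" "normal_form (hmat V X1 X2 p)"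
    and f': "p \<in> V'" "oon_frame U Y1 Y2 V' X1' X2'" "normal_form (hmat V' X1' X2' p)"
    and nz: "hmat V X1 X2 p \<noteq> 0"
  shows "X1 p = X1' p \<and> X2 p = X2' p"
proof -
  interpret F: oriented_orthonormal_frame U Y1 Y2 V X1 X2 by (rule oriented_orthonormal_frameI[OF f(2)])
  interpret G: oriented_orthonormal_frame U Y1 Y2 V' X1' X2' by (rule oriented_orthonormal_frameI[OF f'(2)])
  define m where "m = (k12 p - k21 p) / 2"
  define s where "s = F.ch p + F.sh p"
  define s' where "s' = G.ch p + G.sh p"
  note F_factor = F.boost_lightcone_factor[OF f(1), folded s_def]
    and G_factor = G.boost_lightcone_factor[OF f'(1), folded s'_def]
  have "\<not> (k11 p + m = 0 \<and> k11 p - m = 0)"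
  proof
    assume "k11 p + m = 0 \<and> k11 p - m = 0"
    then have "k11 p = 0" "m = 0" by linarith+
    then show False using nz F.hmat_boost[OF f(1)] mat2_zero unfolding m_def by simp
  qed
  then have "s * s = s' * s'"
    using F.normal_form_hmat_iff[OF f(1)] G.normal_form_hmat_iff[OF f'(1)] f(3) f'(3) F_factor G_factor
    unfolding s_def[symmetric] s'_def[symmetric] m_def[symmetric]
    by (intro normal_pair_rescale_unique[of "k11 p + m" "k11 p - m"]) simp_all
  then have "s = s'"
    using power2_eq_imp_eq[of s s'] F_factor(1) G_factor(1) by (simp add: power2_eq_square)
  then have "(F.ch p - F.sh p) * s = (G.ch p - G.sh p) * s" using F_factor(2) G_factor(2) by simp
  then have "F.ch p - F.sh p = G.ch p - G.sh p" using F_factor(1) by simp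
  moreover have "F.ch p + F.sh p = G.ch p + G.sh p" using \<open>s = s'\<close> unfolding s_def s'_def .
  ultimately have "F.ch p = G.ch p" "F.sh p = G.sh p" by linarith+
  then show ?thesis using F.frame_boost(1,2)[OF f(1)] G.frame_boost(1,2)[OF f'(1)] by simp
qed

end

theorem mainTheorem7:
  fixes U :: "R3 set" and Y1 Y2 :: "R3 \<Rightarrow> R3" and p :: R3
  assumes "contact_subLorentzian U Y1 Y2" and "p \<in> U"
  shows "(\<exists>V X1 X2. p \<in> V \<and> oon_frame U Y1 Y2 V X1 X2 \<and> normal_form (hmat V X1 X2 p))
       \<and> (\<forall>V X1 X2 V' X1' X2'.
            p \<in> V \<and> oon_frame U Y1 Y2 V X1 X2 \<and> normal_form (hmat V X1 X2 p) \<and>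
            p \<in> V' \<and> oon_frame U Y1 Y2 V' X1' X2' \<and> normal_form (hmat V' X1' X2' p) \<and>
            hmat V X1 X2 p \<noteq> 0
            \<longrightarrow> X1 p = X1' p \<and> X2 p = X2' p)"
proof -
  interpret contact_sub_lorentzian U Y1 Y2 by unfold_locales (rule assms(1))
  show ?thesis using normal_frame_exists[OF assms(2)] normal_frame_unique by blast
qed

end
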